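(* Let $H$ be a finite-dimensional Hopf algebra over a field $\Bbbk$ and $B$ a right $H$-comodule algebra. Then every projective $B$-module and every injective $B$-module belongs to $\mathcal{N}_H$; consequently every projective or injective $B$-module is isomorphic to the zero object in $\mathcal{C}(B,H)$.
   Context: $H$ has comultiplication $\Delta(h)=\sum h_1\otimes h_2$, counit $\epsilon$, antipode $S$. A right $H$-comodule algebra is a unital $\Bbbk$-algebra $B$ with a unital algebra map $\Delta_B:B\to B\otimes H$, $\Delta_B(b)=\sum b_1\otimes b_2$, that is coassociative and counital. For a $B$-module $M$ and an $H$-module $U$, $M\otimes U$ is a $B$-module via $b\cdot(x\otimes u)=\sum b_1x\otimes b_2u$. A $B$-module morphism is null-homotopic if it factors through a $B$-module of the form $N\otimes H$ ($H$ the left regular module). $\mathcal{N}_H$ denotes the class of $B$-modules whose identity morphism is null-homotopic. $\mathcal{C}(B,H)$ is the quotient of the category of $B$-modules by the ideal of null-homotopic morphisms. *)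

theory Defs
  imports Main
begin

text \<open>H is a finite-dimensional Hopf algebra over the field 'k, presented by a basis
 e_a indexed by the finite type 'i; an element of H is a coordinate vector 'i => 'k.
 Structure constants:
   e_a e_b = sum_c mu a b c e_c,   1_H = sum_a u a e_a,
   Delta e_a = sum_(b,c) de a b c (e_b (x) e_c),   epsilon e_a = eps a,
   S e_a = sum_c Sa a c e_c.\<close>

definition kron :: "'i \<Rightarrow> 'i \<Rightarrow> 'k::field" where
  "kron a b = (if a = b then 1 else 0)"

definition hopf_algebra ::
  "('i::finite \<Rightarrow> 'i \<Rightarrow> 'i \<Rightarrow> 'k::field) \<Rightarrow> ('i \<Rightarrow> 'k) \<Rightarrow>
   ('i \<Rightarrow> 'i \<Rightarrow> 'i \<Rightarrow> 'k) \<Rightarrow> ('i \<Rightarrow> 'k) \<Rightarrow> ('i \<Rightarrow> 'i \<Rightarrow> 'k) \<Rightarrow> bool" where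
  "hopf_algebra mu u de eps Sa \<longleftrightarrow>
     \<comment> \<open>associativity and unit\<close>
     (\<forall>a b c r. (\<Sum>x\<in>UNIV. mu a b x * mu x c r) = (\<Sum>x\<in>UNIV. mu b c x * mu a x r)) \<and>
     (\<forall>a r. (\<Sum>x\<in>UNIV. u x * mu x a r) = kron a r) \<and>
     (\<forall>a r. (\<Sum>x\<in>UNIV. u x * mu a x r) = kron a r) \<and>
     \<comment> \<open>coassociativity and counit\<close>
     (\<forall>a p q c. (\<Sum>d\<in>UNIV. de a d c * de d p q) = (\<Sum>d\<in>UNIV. de a p d * de d q c)) \<and>
     (\<forall>a c. (\<Sum>d\<in>UNIV. de a d c * eps d) = kron a c) \<and>
     (\<forall>a c. (\<Sum>d\<in>UNIV. de a c d * eps d) = kron a c) \<and>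
     \<comment> \<open>Delta and epsilon are unital algebra maps\<close>
     (\<forall>a b p q. (\<Sum>c\<in>UNIV. mu a b c * de c p q) =
        (\<Sum>p1\<in>UNIV. \<Sum>q1\<in>UNIV. \<Sum>p2\<in>UNIV. \<Sum>q2\<in>UNIV.
           de a p1 q1 * de b p2 q2 * mu p1 p2 p * mu q1 q2 q)) \<and>
     (\<forall>p q. (\<Sum>a\<in>UNIV. u a * de a p q) = u p * u q) \<and>
     (\<forall>a b. (\<Sum>c\<in>UNIV. mu a b c * eps c) = eps a * eps b) \<and>
     (\<Sum>a\<in>UNIV. u a * eps a) = 1 \<and>
     \<comment> \<open>antipode: m(S (x) id)Delta = u epsilon = m(id (x) S)Delta\<close>
     (\<forall>a r. (\<Sum>d\<in>UNIV. \<Sum>c\<in>UNIV. \<Sum>x\<in>UNIV. de a d c * Sa d x * mu x c r) = eps a * u r) \<and>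
     (\<forall>a r. (\<Sum>d\<in>UNIV. \<Sum>c\<in>UNIV. \<Sum>y\<in>UNIV. de a d c * Sa c y * mu d y r) = eps a * u r)"

definition k_algebra :: "('k::field \<Rightarrow> 'b::ring_1 \<Rightarrow> 'b) \<Rightarrow> bool" where
  "k_algebra scB \<longleftrightarrow>
     (\<forall>c x y. scB c (x + y) = scB c x + scB c y) \<and>
     (\<forall>c d x. scB (c + d) x = scB c x + scB d x) \<and>
     (\<forall>c d x. scB (c * d) x = scB c (scB d x)) \<and>
     (\<forall>x. scB 1 x = x) \<and>
     (\<forall>c x y. scB c (x * y) = scB c x * y) \<and>
     (\<forall>c x y. scB c (x * y) = x * scB c y)"

text \<open>Right H-comodule algebra structure Delta_B : B -> B (x) H, written in the basis of H:
  Delta_B(b) = sum_i dB b i (x) e_i.\<close>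

definition comodule_algebra ::
  "('k::field \<Rightarrow> 'b::ring_1 \<Rightarrow> 'b) \<Rightarrow> ('i::finite \<Rightarrow> 'i \<Rightarrow> 'i \<Rightarrow> 'k) \<Rightarrow> ('i \<Rightarrow> 'k) \<Rightarrow>
   ('i \<Rightarrow> 'i \<Rightarrow> 'i \<Rightarrow> 'k) \<Rightarrow> ('i \<Rightarrow> 'k) \<Rightarrow> ('b \<Rightarrow> 'i \<Rightarrow> 'b) \<Rightarrow> bool" where
  "comodule_algebra scB mu u de eps dB \<longleftrightarrow>
     \<comment> \<open>k-linearity\<close>
     (\<forall>x y i. dB (x + y) i = dB x i + dB y i) \<and>
     (\<forall>c x i. dB (scB c x) i = scB c (dB x i)) \<and>
     \<comment> \<open>unital algebra map into B (x) H\<close>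
     (\<forall>x y r. dB (x * y) r = (\<Sum>i\<in>UNIV. \<Sum>j\<in>UNIV. scB (mu i j r) (dB x i * dB y j))) \<and>
     (\<forall>r. dB 1 r = scB (u r) 1) \<and>
     \<comment> \<open>coassociativity: (Delta_B (x) id) Delta_B = (id (x) Delta) Delta_B\<close>
     (\<forall>x j c. dB (dB x c) j = (\<Sum>i\<in>UNIV. scB (de i j c) (dB x i))) \<and>
     \<comment> \<open>counitality: (id (x) epsilon) Delta_B = id\<close>
     (\<forall>x. (\<Sum>i\<in>UNIV. scB (eps i) (dB x i)) = x)"

record ('b, 'm) bmod =
  carrier :: "'m set"
  madd :: "'m \<Rightarrow> 'm \<Rightarrow> 'm"
  mzero :: "'m"
  act :: "'b \<Rightarrow> 'm \<Rightarrow> 'm"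

definition bmodule :: "('b::ring_1, 'm) bmod \<Rightarrow> bool" where
  "bmodule M \<longleftrightarrow>
     mzero M \<in> carrier M \<and>
     (\<forall>x\<in>carrier M. \<forall>y\<in>carrier M. madd M x y \<in> carrier M) \<and>
     (\<forall>b. \<forall>x\<in>carrier M. act M b x \<in> carrier M) \<and>
     (\<forall>x\<in>carrier M. \<forall>y\<in>carrier M. \<forall>z\<in>carrier M.
        madd M (madd M x y) z = madd M x (madd M y z)) \<and>
     (\<forall>x\<in>carrier M. \<forall>y\<in>carrier M. madd M x y = madd M y x) \<and>
     (\<forall>x\<in>carrier M. madd M (mzero M) x = x) \<and>
     (\<forall>x\<in>carrier M. \<exists>y\<in>carrier M. madd M x y = mzero M) \<and>
     (\<forall>b. \<forall>x\<in>carrier M. \<forall>y\<in>carrier M. act M b (madd M x y) = madd M (act M b x) (act M b y)) \<and>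
     (\<forall>a b. \<forall>x\<in>carrier M. act M (a + b) x = madd M (act M a x) (act M b x)) \<and>
     (\<forall>a b. \<forall>x\<in>carrier M. act M (a * b) x = act M a (act M b x)) \<and>
     (\<forall>x\<in>carrier M. act M 1 x = x)"

text \<open>B-module morphisms (only their values on the carrier matter).\<close>

definition bhom :: "('b, 'm) bmod \<Rightarrow> ('b, 'n) bmod \<Rightarrow> ('m \<Rightarrow> 'n) \<Rightarrow> bool" where
  "bhom M N f \<longleftrightarrow>
     (\<forall>x\<in>carrier M. f x \<in> carrier N) \<and>
     (\<forall>x\<in>carrier M. \<forall>y\<in>carrier M. f (madd M x y) = madd N (f x) (f y)) \<and>
     (\<forall>b. \<forall>x\<in>carrier M. f (act M b x) = act N b (f x))"

definition enum_idx :: "'i::finite list" where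
  "enum_idx = (SOME xs. distinct xs \<and> set xs = UNIV)"

definition msum :: "('b, 'm) bmod \<Rightarrow> ('i::finite \<Rightarrow> 'm) \<Rightarrow> 'm" where
  "msum M f = foldr (\<lambda>i s. madd M (f i) s) enum_idx (mzero M)"

text \<open>The B-module N (x) H (H the left regular H-module), with
  b . (x (x) h) = sum b_1 x (x) b_2 h.  An element sum_j x_j (x) e_j is represented by its
  coordinate function x : 'i => 'n.\<close>

definition tensH :: "('k::field \<Rightarrow> 'b::ring_1 \<Rightarrow> 'b) \<Rightarrow> ('i::finite \<Rightarrow> 'i \<Rightarrow> 'i \<Rightarrow> 'k) \<Rightarrow>
   ('b \<Rightarrow> 'i \<Rightarrow> 'b) \<Rightarrow> ('b, 'n) bmod \<Rightarrow> ('b, 'i \<Rightarrow> 'n) bmod" where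
  "tensH scB mu dB N =
     \<lparr> carrier = {x. \<forall>i. x i \<in> carrier N},
       madd = (\<lambda>x y i. madd N (x i) (y i)),
       mzero = (\<lambda>i. mzero N),
       act = (\<lambda>b x c. msum N (\<lambda>i. msum N (\<lambda>j. act N (scB (mu i j c) (dB b i)) (x j)))) \<rparr>"

text \<open>Null-homotopic morphisms: f : M -> M' factors through a module N (x) H.
  (The module N is taken with carrier in the same type as M; witnesses always exist there.)\<close>

definition nullhom :: "('k::field \<Rightarrow> 'b::ring_1 \<Rightarrow> 'b) \<Rightarrow> ('i::finite \<Rightarrow> 'i \<Rightarrow> 'i \<Rightarrow> 'k) \<Rightarrow>
   ('b \<Rightarrow> 'i \<Rightarrow> 'b) \<Rightarrow> ('b, 'm) bmod \<Rightarrow> ('b, 'n) bmod \<Rightarrow> ('m \<Rightarrow> 'n) \<Rightarrow> bool" where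
  "nullhom scB mu dB M M' f \<longleftrightarrow>
     (\<exists>(N :: ('b, 'm) bmod) g h. bmodule N \<and>
        bhom M (tensH scB mu dB N) g \<and> bhom (tensH scB mu dB N) M' h \<and>
        (\<forall>x\<in>carrier M. f x = h (g x)))"

definition in_NH :: "('k::field \<Rightarrow> 'b::ring_1 \<Rightarrow> 'b) \<Rightarrow> ('i::finite \<Rightarrow> 'i \<Rightarrow> 'i \<Rightarrow> 'k) \<Rightarrow>
   ('b \<Rightarrow> 'i \<Rightarrow> 'b) \<Rightarrow> ('b, 'm) bmod \<Rightarrow> bool" where
  "in_NH scB mu dB M \<longleftrightarrow> nullhom scB mu dB M M id"

text \<open>The zero module (on the same carrier type), and isomorphism to the zero object in the
  quotient category C(B,H): morphisms f : M -> 0, g : 0 -> M whose composites agree with the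
  identities modulo null-homotopic morphisms.\<close>

definition zero_bmod :: "('b, 'm) bmod \<Rightarrow> ('b, 'm) bmod" where
  "zero_bmod M = \<lparr> carrier = {mzero M}, madd = (\<lambda>x y. mzero M), mzero = mzero M,
                   act = (\<lambda>b x. mzero M) \<rparr>"

definition iso_zero_C :: "('k::field \<Rightarrow> 'b::ring_1 \<Rightarrow> 'b) \<Rightarrow> ('i::finite \<Rightarrow> 'i \<Rightarrow> 'i \<Rightarrow> 'k) \<Rightarrow>
   ('b \<Rightarrow> 'i \<Rightarrow> 'b) \<Rightarrow> ('b, 'm) bmod \<Rightarrow> bool" where
  "iso_zero_C scB mu dB M \<longleftrightarrow>
     (\<exists>f g. bhom M (zero_bmod M) f \<and> bhom (zero_bmod M) M g \<and>
        nullhom scB mu dB M M (\<lambda>x. madd M (g (f x)) (act M (- 1) x)) \<and>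
        nullhom scB mu dB (zero_bmod M) (zero_bmod M)
          (\<lambda>x. madd (zero_bmod M) (f (g x)) (act (zero_bmod M) (- 1) x)))"

text \<open>Lifting / extension properties against all B-modules whose carriers live in the
  type 'u (playing the role of a universe of test modules).\<close>

definition projective_mod :: "'u itself \<Rightarrow> ('b::ring_1, 'm) bmod \<Rightarrow> bool" where
  "projective_mod (TYPE('u)) P \<longleftrightarrow>
     (\<forall>(X :: ('b, 'u) bmod) (Y :: ('b, 'u) bmod) p f.
        bmodule X \<and> bmodule Y \<and> bhom X Y p \<and> p ` carrier X = carrier Y \<and> bhom P Y f \<longrightarrow>
        (\<exists>h. bhom P X h \<and> (\<forall>x\<in>carrier P. p (h x) = f x)))"

definition injective_mod :: "'u itself \<Rightarrow> ('b::ring_1, 'm) bmod \<Rightarrow> bool" where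
  "injective_mod (TYPE('u)) E \<longleftrightarrow>
     (\<forall>(X :: ('b, 'u) bmod) (Y :: ('b, 'u) bmod) i f.
        bmodule X \<and> bmodule Y \<and> bhom X Y i \<and> inj_on i (carrier X) \<and> bhom X E f \<longrightarrow>
        (\<exists>h. bhom Y E h \<and> (\<forall>x\<in>carrier X. h (i x) = f x)))"

end

theory Submission
  imports Defs
begin

text \<open>For a \<open>B\<close>-module \<open>M\<close>, the counit map \<open>M \<otimes> H \<rightarrow> M\<close>, \<open>m \<otimes> h \<mapsto> \<epsilon>(h) m\<close>, is a
  \<open>B\<close>-linear surjection, so a projective \<open>M\<close> is a retract of \<open>M \<otimes> H\<close>. Dually, for a
  nonzero left integral \<open>\<Lambda>\<close> of \<open>H\<close> the map \<open>m \<mapsto> m \<otimes> \<Lambda>\<close> is a \<open>B\<close>-linear injection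
  \<open>M \<rightarrow> M \<otimes> H\<close>, so an injective \<open>M\<close> is a retract of \<open>M \<otimes> H\<close> as well. In both cases
  \<open>id\<^sub>M\<close> factors through \<open>M \<otimes> H\<close>, which makes \<open>M\<close> a zero object of \<open>\<C>(B,H)\<close>.
  The integral \<open>\<Lambda>\<close> exists by the Larson-Sweedler argument: \<open>H\<close> is a Hopf module over the
  dual Hopf algebra \<open>H\<^sup>*\<close>, its coinvariants are the left integrals, and by the fundamental
  theorem of Hopf modules a nonzero Hopf module has nonzero coinvariants.\<close>

section \<open>Hopf algebras in coordinates\<close>

lemma kron_sym: "kron a b = kron b a"
  by (simp add: kron_def)

lemma kron_mult [simp]:
  "kron a b * x = (if a = b then x else 0)" "x * kron a b = (if a = b then x else 0)"
  by (simp_all add: kron_def)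

lemma sum_if_const_cond [simp]:
  "(\<Sum>k\<in>A. if P then f k else 0) = (if P then (\<Sum>k\<in>A. f k) else 0)"
  by simp

locale hopf =
  fixes mu :: "'i::finite \<Rightarrow> 'i \<Rightarrow> 'i \<Rightarrow> 'k::field"
    and u :: "'i \<Rightarrow> 'k" and de :: "'i \<Rightarrow> 'i \<Rightarrow> 'i \<Rightarrow> 'k"
    and eps :: "'i \<Rightarrow> 'k" and Sa :: "'i \<Rightarrow> 'i \<Rightarrow> 'k"
  assumes hopf_algebra: "hopf_algebra mu u de eps Sa"
begin

lemma mu_assoc: "(\<Sum>x\<in>UNIV. mu a b x * mu x c r) = (\<Sum>x\<in>UNIV. mu b c x * mu a x r)"
  and mu_unit_left: "(\<Sum>x\<in>UNIV. u x * mu x a r) = kron a r"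
  and mu_unit_right: "(\<Sum>x\<in>UNIV. u x * mu a x r) = kron a r"
  and de_coassoc: "(\<Sum>d\<in>UNIV. de a d c * de d p q) = (\<Sum>d\<in>UNIV. de a p d * de d q c)"
  and de_counit_left: "(\<Sum>d\<in>UNIV. de a d c * eps d) = kron a c"
  and de_counit_right: "(\<Sum>d\<in>UNIV. de a c d * eps d) = kron a c"
  and de_mu: "(\<Sum>c\<in>UNIV. mu a b c * de c p q) =
        (\<Sum>p1\<in>UNIV. \<Sum>q1\<in>UNIV. \<Sum>p2\<in>UNIV. \<Sum>q2\<in>UNIV.
           de a p1 q1 * de b p2 q2 * mu p1 p2 p * mu q1 q2 q)"
  and de_unit: "(\<Sum>a\<in>UNIV. u a * de a p q) = u p * u q"
  and eps_mu: "(\<Sum>c\<in>UNIV. mu a b c * eps c) = eps a * eps b"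
  and eps_unit: "(\<Sum>a\<in>UNIV. u a * eps a) = 1"
  and antipode_left: "(\<Sum>d\<in>UNIV. \<Sum>c\<in>UNIV. \<Sum>x\<in>UNIV. de a d c * Sa d x * mu x c r) = eps a * u r"
  and antipode_right: "(\<Sum>d\<in>UNIV. \<Sum>c\<in>UNIV. \<Sum>y\<in>UNIV. de a d c * Sa c y * mu d y r) = eps a * u r"
  using hopf_algebra unfolding hopf_algebra_def by simp_all

lemma eps_antipode: "(\<Sum>c\<in>UNIV. Sa a c * eps c) = eps a"
proof -
  have "eps a = (\<Sum>r\<in>UNIV. eps a * u r * eps r)"
    by (simp add: mult.assoc eps_unit flip: sum_distrib_left)
  also have "\<dots> = (\<Sum>r\<in>UNIV. (\<Sum>d\<in>UNIV. \<Sum>c\<in>UNIV. \<Sum>x\<in>UNIV. de a d c * Sa d x * mu x c r) * eps r)"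
    by (simp add: antipode_left)
  also have "\<dots> = (\<Sum>d\<in>UNIV. \<Sum>c\<in>UNIV. \<Sum>x\<in>UNIV. de a d c * Sa d x * (\<Sum>r\<in>UNIV. mu x c r * eps r))"
    by (simp only: sum_distrib_left sum_distrib_right sum.cartesian_product)
       (rule sum.reindex_bij_witness[where j="\<lambda>(r,d,c,x). (d,c,x,r)" and i="\<lambda>(d,c,x,r). (r,d,c,x)"],
        auto simp: mult_ac)
  also have "\<dots> = (\<Sum>d\<in>UNIV. (\<Sum>c\<in>UNIV. de a d c * eps c) * (\<Sum>x\<in>UNIV. Sa d x * eps x))"
    unfolding eps_mu by (simp add: sum_distrib_left sum_distrib_right mult_ac)
  also have "\<dots> = (\<Sum>x\<in>UNIV. Sa a x * eps x)"
    by (simp add: de_counit_right sum.delta)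
  finally show ?thesis ..
qed

definition tensor_mult :: "('i \<Rightarrow> 'i \<Rightarrow> 'k) \<Rightarrow> ('i \<Rightarrow> 'i \<Rightarrow> 'k) \<Rightarrow> 'i \<Rightarrow> 'i \<Rightarrow> 'k" where
  "tensor_mult T U p q = (\<Sum>p1\<in>UNIV. \<Sum>q1\<in>UNIV. \<Sum>p2\<in>UNIV. \<Sum>q2\<in>UNIV.
     T p1 q1 * U p2 q2 * mu p1 p2 p * mu q1 q2 q)"

text \<open>Convolution in the algebra of linear maps \<open>H \<rightarrow> H \<otimes> H\<close>, a map \<open>F\<close> being given by
  \<open>F e\<^sub>x = \<Sum>\<^sub>p\<^sub>,\<^sub>q F x p q (e\<^sub>p \<otimes> e\<^sub>q)\<close>.\<close>

definition conv :: "('i \<Rightarrow> 'i \<Rightarrow> 'i \<Rightarrow> 'k) \<Rightarrow> ('i \<Rightarrow> 'i \<Rightarrow> 'i \<Rightarrow> 'k) \<Rightarrow> 'i \<Rightarrow> 'i \<Rightarrow> 'i \<Rightarrow> 'k" where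
  "conv F G x p q = (\<Sum>a\<in>UNIV. \<Sum>b\<in>UNIV. de x a b * tensor_mult (F a) (G b) p q)"

definition conv_unit :: "'i \<Rightarrow> 'i \<Rightarrow> 'i \<Rightarrow> 'k" where
  "conv_unit x p q = eps x * u p * u q"

lemma conv_assoc: "conv (conv F G) K = conv F (conv G K)"
proof (intro ext)
  fix x p q
  have "conv (conv F G) K x p q =
    (\<Sum>b\<in>UNIV. \<Sum>a'\<in>UNIV. \<Sum>b'\<in>UNIV. \<Sum>r1\<in>UNIV. \<Sum>s1\<in>UNIV. \<Sum>r2\<in>UNIV. \<Sum>s2\<in>UNIV. \<Sum>p2\<in>UNIV. \<Sum>q2\<in>UNIV.
      F a' r1 s1 * G b' r2 s2 * K b p2 q2 * (\<Sum>a\<in>UNIV. de x a b * de a a' b') *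
      (\<Sum>p1\<in>UNIV. mu r1 r2 p1 * mu p1 p2 p) * (\<Sum>q1\<in>UNIV. mu s1 s2 q1 * mu q1 q2 q))"
    unfolding conv_def tensor_mult_def
    by (simp only: sum_distrib_left sum_distrib_right sum.cartesian_product)
       (rule sum.reindex_bij_witness[where j="\<lambda>(a,b,p1,q1,p2,q2,a',b',r1,s1,r2,s2). (b,a',b',r1,s1,r2,s2,p2,q2,q1,p1,a)"
         and i="\<lambda>(b,a',b',r1,s1,r2,s2,p2,q2,q1,p1,a). (a,b,p1,q1,p2,q2,a',b',r1,s1,r2,s2)"],
        auto simp: mult_ac)
  also have "\<dots> =
    (\<Sum>b\<in>UNIV. \<Sum>a'\<in>UNIV. \<Sum>b'\<in>UNIV. \<Sum>r1\<in>UNIV. \<Sum>s1\<in>UNIV. \<Sum>r2\<in>UNIV. \<Sum>s2\<in>UNIV. \<Sum>p2\<in>UNIV. \<Sum>q2\<in>UNIV.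
      F a' r1 s1 * G b' r2 s2 * K b p2 q2 * (\<Sum>a\<in>UNIV. de x a' a * de a b' b) *
      (\<Sum>t\<in>UNIV. mu r2 p2 t * mu r1 t p) * (\<Sum>t\<in>UNIV. mu s2 q2 t * mu s1 t q))"
    by (simp only: de_coassoc mu_assoc)
  also have "\<dots> = conv F (conv G K) x p q"
    unfolding conv_def tensor_mult_def
    by (simp only: sum_distrib_left sum_distrib_right sum.cartesian_product)
       (rule sum.reindex_bij_witness[where j="\<lambda>(b,a',b',r1,s1,r2,s2,p2,q2,t',t,a). (a',a,r1,s1,t,t',b',b,r2,s2,p2,q2)"
         and i="\<lambda>(a',a,r1,s1,t,t',b',b,r2,s2,p2,q2). (b,a',b',r1,s1,r2,s2,p2,q2,t',t,a)"],
        auto simp: mult_ac)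
  finally show "conv (conv F G) K x p q = conv F (conv G K) x p q" .
qed

lemma conv_unit_left: "conv conv_unit K = K"
proof (intro ext)
  fix x p q
  have "conv conv_unit K x p q = (\<Sum>b\<in>UNIV. \<Sum>p2\<in>UNIV. \<Sum>q2\<in>UNIV. K b p2 q2 *
      (\<Sum>a\<in>UNIV. de x a b * eps a) * (\<Sum>p1\<in>UNIV. u p1 * mu p1 p2 p) * (\<Sum>q1\<in>UNIV. u q1 * mu q1 q2 q))"
    unfolding conv_def tensor_mult_def conv_unit_def
    by (simp only: sum_distrib_left sum_distrib_right sum.cartesian_product)
       (rule sum.reindex_bij_witness[where j="\<lambda>(a,b,p1,q1,p2,q2). (b,p2,q2,q1,p1,a)"
         and i="\<lambda>(b,p2,q2,q1,p1,a). (a,b,p1,q1,p2,q2)"], auto simp: mult_ac)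
  also have "\<dots> = K x p q"
    by (simp add: de_counit_left mu_unit_left sum.delta sum.delta')
  finally show "conv conv_unit K x p q = K x p q" .
qed

lemma conv_unit_right: "conv F conv_unit = F"
proof (intro ext)
  fix x p q
  have "conv F conv_unit x p q = (\<Sum>a\<in>UNIV. \<Sum>p1\<in>UNIV. \<Sum>q1\<in>UNIV. F a p1 q1 *
      (\<Sum>b\<in>UNIV. de x a b * eps b) * (\<Sum>p2\<in>UNIV. u p2 * mu p1 p2 p) * (\<Sum>q2\<in>UNIV. u q2 * mu q1 q2 q))"
    unfolding conv_def tensor_mult_def conv_unit_def
    by (simp only: sum_distrib_left sum_distrib_right sum.cartesian_product)
       (rule sum.reindex_bij_witness[where j="\<lambda>(a,b,p1,q1,p2,q2). (a,p1,q1,q2,p2,b)"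
         and i="\<lambda>(a,p1,q1,q2,p2,b). (a,b,p1,q1,p2,q2)"], auto simp: mult_ac)
  also have "\<dots> = F x p q"
    by (simp add: de_counit_right mu_unit_right sum.delta sum.delta')
  finally show "conv F conv_unit x p q = F x p q" .
qed

text \<open>The coordinates of \<open>\<Delta> \<circ> S\<close> and of \<open>(S \<otimes> S) \<circ> \<tau> \<circ> \<Delta>\<close>; they are a left and a
  right convolution inverse of \<open>\<Delta>\<close>, hence equal.\<close>

definition comult_antipode :: "'i \<Rightarrow> 'i \<Rightarrow> 'i \<Rightarrow> 'k" where
  "comult_antipode x p q = (\<Sum>a\<in>UNIV. Sa x a * de a p q)"

definition antipode_flip_comult :: "'i \<Rightarrow> 'i \<Rightarrow> 'i \<Rightarrow> 'k" where
  "antipode_flip_comult x p q = (\<Sum>p'\<in>UNIV. \<Sum>q'\<in>UNIV. de x q' p' * Sa p' p * Sa q' q)"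

lemma conv_comult_antipode_comult: "conv comult_antipode de = conv_unit"
proof (intro ext)
  fix x p q
  have "conv comult_antipode de x p q = (\<Sum>a\<in>UNIV. \<Sum>b\<in>UNIV. \<Sum>c\<in>UNIV. de x a b * Sa a c *
      (\<Sum>p1\<in>UNIV. \<Sum>q1\<in>UNIV. \<Sum>p2\<in>UNIV. \<Sum>q2\<in>UNIV. de c p1 q1 * de b p2 q2 * mu p1 p2 p * mu q1 q2 q))"
    unfolding conv_def tensor_mult_def comult_antipode_def
    by (simp only: sum_distrib_left sum_distrib_right sum.cartesian_product)
       (rule sum.reindex_bij_witness[where j="\<lambda>(a,b,p1,q1,p2,q2,c). (a,b,c,p1,q1,p2,q2)"
         and i="\<lambda>(a,b,c,p1,q1,p2,q2). (a,b,p1,q1,p2,q2,c)"], auto simp: mult_ac)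
  also have "\<dots> = (\<Sum>a\<in>UNIV. \<Sum>b\<in>UNIV. \<Sum>c\<in>UNIV. de x a b * Sa a c * (\<Sum>t\<in>UNIV. mu c b t * de t p q))"
    by (simp only: de_mu)
  also have "\<dots> = (\<Sum>t\<in>UNIV. de t p q * (\<Sum>a\<in>UNIV. \<Sum>b\<in>UNIV. \<Sum>c\<in>UNIV. de x a b * Sa a c * mu c b t))"
    by (simp only: sum_distrib_left sum_distrib_right sum.cartesian_product)
       (rule sum.reindex_bij_witness[where j="\<lambda>(a,b,c,t). (t,a,b,c)" and i="\<lambda>(t,a,b,c). (a,b,c,t)"],
        auto simp: mult_ac)
  also have "\<dots> = eps x * (\<Sum>t\<in>UNIV. u t * de t p q)"
    unfolding antipode_left by (simp add: sum_distrib_left mult_ac)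
  also have "\<dots> = conv_unit x p q"
    by (simp add: de_unit conv_unit_def mult_ac)
  finally show "conv comult_antipode de x p q = conv_unit x p q" .
qed

lemma conv_comult_antipode_flip_comult: "conv de antipode_flip_comult = conv_unit"
proof (intro ext)
  fix x p q
  have "conv de antipode_flip_comult x p q =
    (\<Sum>b\<in>UNIV. \<Sum>p1\<in>UNIV. \<Sum>q1\<in>UNIV. \<Sum>p2\<in>UNIV. \<Sum>q2\<in>UNIV. \<Sum>p'\<in>UNIV. \<Sum>q'\<in>UNIV.
      de b q' p' * Sa p' p2 * Sa q' q2 * mu p1 p2 p * mu q1 q2 q * (\<Sum>a\<in>UNIV. de x a b * de a p1 q1))"
    unfolding conv_def tensor_mult_def antipode_flip_comult_def
    by (simp only: sum_distrib_left sum_distrib_right sum.cartesian_product)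
       (rule sum.reindex_bij_witness[where j="\<lambda>(a,b,p1,q1,p2,q2,p',q'). (b,p1,q1,p2,q2,p',q',a)"
         and i="\<lambda>(b,p1,q1,p2,q2,p',q',a). (a,b,p1,q1,p2,q2,p',q')"], auto simp: mult_ac)
  also have "\<dots> =
    (\<Sum>a\<in>UNIV. \<Sum>p1\<in>UNIV. \<Sum>q1\<in>UNIV. \<Sum>p2\<in>UNIV. \<Sum>q2\<in>UNIV. \<Sum>p'\<in>UNIV. \<Sum>q'\<in>UNIV.
      de x p1 a * Sa p' p2 * Sa q' q2 * mu p1 p2 p * mu q1 q2 q * (\<Sum>b\<in>UNIV. de a q1 b * de b q' p'))"
    unfolding de_coassoc
    by (simp only: sum_distrib_left sum_distrib_right sum.cartesian_product)
       (rule sum.reindex_bij_witness[where j="\<lambda>(b,p1,q1,p2,q2,p',q',a). (a,p1,q1,p2,q2,p',q',b)"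
         and i="\<lambda>(a,p1,q1,p2,q2,p',q',b). (b,p1,q1,p2,q2,p',q',a)"], auto simp: mult_ac)
  also have "\<dots> = (\<Sum>a\<in>UNIV. \<Sum>p1\<in>UNIV. \<Sum>p2\<in>UNIV. \<Sum>p'\<in>UNIV. \<Sum>b\<in>UNIV.
      de x p1 a * Sa p' p2 * mu p1 p2 p * de a b p' *
      (\<Sum>q1\<in>UNIV. \<Sum>q'\<in>UNIV. \<Sum>q2\<in>UNIV. de b q1 q' * Sa q' q2 * mu q1 q2 q))"
    unfolding de_coassoc[symmetric]
    by (simp only: sum_distrib_left sum_distrib_right sum.cartesian_product)
       (rule sum.reindex_bij_witness[where j="\<lambda>(a,p1,q1,p2,q2,p',q',b). (a,p1,p2,p',b,q1,q',q2)"
         and i="\<lambda>(a,p1,p2,p',b,q1,q',q2). (a,p1,q1,p2,q2,p',q',b)"], auto simp: mult_ac)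
  also have "\<dots> = (\<Sum>a\<in>UNIV. \<Sum>p1\<in>UNIV. \<Sum>p2\<in>UNIV. \<Sum>p'\<in>UNIV.
      de x p1 a * Sa p' p2 * mu p1 p2 p * u q * (\<Sum>b\<in>UNIV. de a b p' * eps b))"
    unfolding antipode_right by (simp add: sum_distrib_left mult_ac)
  also have "\<dots> = (\<Sum>p1\<in>UNIV. \<Sum>a\<in>UNIV. \<Sum>p2\<in>UNIV. de x p1 a * Sa a p2 * mu p1 p2 p) * u q"
    by (simp add: de_counit_left sum.delta sum.delta' sum_distrib_right)
       (rule sum.swap)
  also have "\<dots> = conv_unit x p q"
    by (simp only: antipode_right conv_unit_def)
  finally show "conv de antipode_flip_comult x p q = conv_unit x p q" .
qed

lemma antipode_comult:
  "(\<Sum>a\<in>UNIV. Sa x a * de a p q) = (\<Sum>p'\<in>UNIV. \<Sum>q'\<in>UNIV. de x q' p' * Sa p' p * Sa q' q)"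
proof -
  have "comult_antipode = conv comult_antipode conv_unit"
    by (simp add: conv_unit_right)
  also have "\<dots> = conv (conv comult_antipode de) antipode_flip_comult"
    by (simp add: conv_assoc conv_comult_antipode_flip_comult)
  also have "\<dots> = antipode_flip_comult"
    by (simp add: conv_comult_antipode_comult conv_unit_left)
  finally show ?thesis
    unfolding comult_antipode_def antipode_flip_comult_def by meson
qed

lemma hopf_dual: "hopf (\<lambda>b c a. de a b c) eps (\<lambda>a b c. mu b c a) u (\<lambda>a c. Sa c a)"
  unfolding hopf_def hopf_algebra_def
proof (intro conjI allI)
  fix a b c r
  show "(\<Sum>x\<in>UNIV. de x a b * de r x c) = (\<Sum>x\<in>UNIV. de x b c * de r a x)"
    using de_coassoc[of r c a b] by (simp add: mult_ac)
  show "(\<Sum>x\<in>UNIV. eps x * de r x a) = kron a r" "(\<Sum>x\<in>UNIV. eps x * de r a x) = kron a r"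
    using de_counit_left[of r a] de_counit_right[of r a] by (simp_all add: mult_ac kron_sym)
  show "(\<Sum>x\<in>UNIV. mu x c a * mu b r x) = (\<Sum>x\<in>UNIV. mu b x a * mu r c x)"
    using mu_assoc[of b r c a] by (simp add: mult_ac)
  show "(\<Sum>x\<in>UNIV. mu x r a * u x) = kron a r" "(\<Sum>x\<in>UNIV. mu r x a * u x) = kron a r"
    using mu_unit_left[of r a] mu_unit_right[of r a] by (simp_all add: mult_ac kron_sym)
  show "(\<Sum>x\<in>UNIV. eps x * mu a b x) = eps a * eps b"
    using eps_mu[of a b] by (simp add: mult_ac)
  show "(\<Sum>x\<in>UNIV. de x a b * u x) = u a * u b"
    using de_unit[of a b] by (simp add: mult_ac)
  show "(\<Sum>a\<in>UNIV. eps a * u a) = 1"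
    using eps_unit by (simp add: mult_ac)
next
  fix a b p q
  have "(\<Sum>c\<in>UNIV. de c a b * mu p q c) =
      (\<Sum>p1\<in>UNIV. \<Sum>q1\<in>UNIV. \<Sum>p2\<in>UNIV. \<Sum>q2\<in>UNIV. de p p1 q1 * de q p2 q2 * mu p1 p2 a * mu q1 q2 b)"
    using de_mu[of p q a b] by (simp add: mult_ac)
  also have "\<dots> =
      (\<Sum>p1\<in>UNIV. \<Sum>q1\<in>UNIV. \<Sum>p2\<in>UNIV. \<Sum>q2\<in>UNIV. mu p1 q1 a * mu p2 q2 b * de p p1 p2 * de q q1 q2)"
    by (simp only: sum_distrib_left sum_distrib_right sum.cartesian_product)
       (rule sum.reindex_bij_witness[where j="\<lambda>(p1,q1,p2,q2). (p1,p2,q1,q2)"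
         and i="\<lambda>(p1,p2,q1,q2). (p1,q1,p2,q2)"], auto simp: mult_ac)
  finally show "(\<Sum>c\<in>UNIV. de c a b * mu p q c) = \<dots>" .
next
  fix a r
  show "(\<Sum>d\<in>UNIV. \<Sum>c\<in>UNIV. \<Sum>x\<in>UNIV. mu d c a * Sa x d * de r x c) = u a * eps r"
    unfolding mult.commute[of "u a"] antipode_left[of r a, symmetric]
    by (simp only: sum.cartesian_product)
       (rule sum.reindex_bij_witness[where j="\<lambda>(d,c,x). (x,c,d)" and i="\<lambda>(x,c,d). (d,c,x)"],
        auto simp: mult_ac)
  show "(\<Sum>d\<in>UNIV. \<Sum>c\<in>UNIV. \<Sum>y\<in>UNIV. mu d c a * Sa y c * de r d y) = u a * eps r"
    unfolding mult.commute[of "u a"] antipode_right[of r a, symmetric]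
    by (simp only: sum.cartesian_product)
       (rule sum.reindex_bij_witness[where j="\<lambda>(d,c,y). (d,y,c)" and i="\<lambda>(d,y,c). (d,c,y)"],
        auto simp: mult_ac)
qed

text \<open>\<open>S(p q) = S(q) S(p)\<close>, the dual statement of \<open>antipode_comult\<close>.\<close>

lemma antipode_mult:
  "(\<Sum>a\<in>UNIV. Sa a x * mu p q a) = (\<Sum>p'\<in>UNIV. \<Sum>q'\<in>UNIV. mu q' p' x * Sa p p' * Sa q q')"
  using hopf.antipode_comult[OF hopf_dual, of x p q] .

lemma antipode_mult_comult_cancel:
  "(\<Sum>p1\<in>UNIV. \<Sum>q1\<in>UNIV. \<Sum>t\<in>UNIV. \<Sum>y\<in>UNIV. de h p1 q1 * mu p1 x t * Sa t y * mu y q1 r) = eps h * Sa x r"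
proof -
  have "(\<Sum>p1\<in>UNIV. \<Sum>q1\<in>UNIV. \<Sum>t\<in>UNIV. \<Sum>y\<in>UNIV. de h p1 q1 * mu p1 x t * Sa t y * mu y q1 r) =
      (\<Sum>p1\<in>UNIV. \<Sum>q1\<in>UNIV. \<Sum>y\<in>UNIV. de h p1 q1 * mu y q1 r * (\<Sum>t\<in>UNIV. Sa t y * mu p1 x t))"
    by (simp only: sum_distrib_left sum_distrib_right sum.cartesian_product)
       (rule sum.reindex_bij_witness[where j="\<lambda>(p1,q1,t,y). (p1,q1,y,t)" and i="\<lambda>(p1,q1,y,t). (p1,q1,t,y)"],
        auto simp: mult_ac)
  also have "\<dots> = (\<Sum>q'\<in>UNIV. \<Sum>p1\<in>UNIV. \<Sum>q1\<in>UNIV. \<Sum>p'\<in>UNIV.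
      Sa x q' * de h p1 q1 * Sa p1 p' * (\<Sum>y\<in>UNIV. mu q' p' y * mu y q1 r))"
    unfolding antipode_mult
    by (simp only: sum_distrib_left sum_distrib_right sum.cartesian_product)
       (rule sum.reindex_bij_witness[where j="\<lambda>(p1,q1,y,p',q'). (q',p1,q1,p',y)"
         and i="\<lambda>(q',p1,q1,p',y). (p1,q1,y,p',q')"], auto simp: mult_ac)
  also have "\<dots> = (\<Sum>q'\<in>UNIV. \<Sum>y\<in>UNIV. Sa x q' * mu q' y r *
      (\<Sum>p1\<in>UNIV. \<Sum>q1\<in>UNIV. \<Sum>p'\<in>UNIV. de h p1 q1 * Sa p1 p' * mu p' q1 y))"
    unfolding mu_assoc
    by (simp only: sum_distrib_left sum_distrib_right sum.cartesian_product)
       (rule sum.reindex_bij_witness[where j="\<lambda>(q',p1,q1,p',y). (q',y,p1,q1,p')"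
         and i="\<lambda>(q',y,p1,q1,p'). (q',p1,q1,p',y)"], auto simp: mult_ac)
  also have "\<dots> = eps h * (\<Sum>q'\<in>UNIV. Sa x q' * (\<Sum>y\<in>UNIV. u y * mu q' y r))"
    unfolding antipode_left by (simp add: sum_distrib_left mult_ac)
  also have "\<dots> = eps h * Sa x r"
    by (simp add: mu_unit_right)
  finally show ?thesis .
qed

end

section \<open>Hopf modules and integrals\<close>

text \<open>A finite-dimensional right Hopf module \<open>M\<close> over \<open>H\<close>, with basis \<open>m\<^sub>j\<close>:
  \<open>m\<^sub>m \<cdot> e\<^sub>f = \<Sum>\<^sub>r act m f r m\<^sub>r\<close> and \<open>\<rho>(m\<^sub>m) = \<Sum>\<^sub>r\<^sub>,\<^sub>f coact m r f (m\<^sub>r \<otimes> e\<^sub>f)\<close>.\<close>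

locale hopf_module = hopf mu u de eps Sa
  for mu :: "'i::finite \<Rightarrow> 'i \<Rightarrow> 'i \<Rightarrow> 'k::field" and u de eps Sa +
  fixes act :: "'j::finite \<Rightarrow> 'i \<Rightarrow> 'j \<Rightarrow> 'k" and coact :: "'j \<Rightarrow> 'j \<Rightarrow> 'i \<Rightarrow> 'k"
  assumes act_assoc: "(\<Sum>r\<in>UNIV. act m f r * act r g s) = (\<Sum>h\<in>UNIV. mu f g h * act m h s)"
    and act_unit: "(\<Sum>f\<in>UNIV. u f * act m f s) = kron m s"
    and coact_coassoc: "(\<Sum>r\<in>UNIV. coact m r f * coact r s g) = (\<Sum>h\<in>UNIV. coact m s h * de h g f)"
    and coact_counit: "(\<Sum>f\<in>UNIV. coact m r f * eps f) = kron m r"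
    and coact_act: "(\<Sum>r\<in>UNIV. act m f r * coact r s g) =
      (\<Sum>r\<in>UNIV. \<Sum>h\<in>UNIV. \<Sum>f1\<in>UNIV. \<Sum>f2\<in>UNIV. coact m r h * de f f1 f2 * act r f1 s * mu h f2 g)"
begin

text \<open>The projection \<open>m \<mapsto> m\<^sub>0 \<cdot> S(m\<^sub>1)\<close> onto the coinvariants.\<close>

definition coinv_proj :: "'j \<Rightarrow> 'j \<Rightarrow> 'k" where
  "coinv_proj m s = (\<Sum>r\<in>UNIV. \<Sum>f\<in>UNIV. \<Sum>t\<in>UNIV. coact m r f * Sa f t * act r t s)"

lemma coinv_proj_coinvariant:
  "(\<Sum>s\<in>UNIV. coinv_proj m s * coact s s' g) = coinv_proj m s' * u g"
proof -
  have "(\<Sum>s\<in>UNIV. coinv_proj m s * coact s s' g) =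
      (\<Sum>r\<in>UNIV. \<Sum>f\<in>UNIV. \<Sum>t\<in>UNIV. coact m r f * Sa f t * (\<Sum>s\<in>UNIV. act r t s * coact s s' g))"
    unfolding coinv_proj_def
    by (simp only: sum_distrib_left sum_distrib_right sum.cartesian_product)
       (rule sum.reindex_bij_witness[where j="\<lambda>(s,r,f,t). (r,f,t,s)" and i="\<lambda>(r,f,t,s). (s,r,f,t)"],
        auto simp: mult_ac)
  also have "\<dots> = (\<Sum>f\<in>UNIV. \<Sum>r'\<in>UNIV. \<Sum>h\<in>UNIV. \<Sum>f1\<in>UNIV. \<Sum>f2\<in>UNIV. act r' f1 s' * mu h f2 g *
      (\<Sum>r\<in>UNIV. coact m r f * coact r r' h) * (\<Sum>t\<in>UNIV. Sa f t * de t f1 f2))"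
    unfolding coact_act
    by (simp only: sum_distrib_left sum_distrib_right sum.cartesian_product)
       (rule sum.reindex_bij_witness[where j="\<lambda>(r,f,t,r',h,f1,f2). (f,r',h,f1,f2,t,r)"
         and i="\<lambda>(f,r',h,f1,f2,t,r). (r,f,t,r',h,f1,f2)"], auto simp: mult_ac)
  also have "\<dots> = (\<Sum>k\<in>UNIV. \<Sum>r'\<in>UNIV. \<Sum>f1\<in>UNIV. \<Sum>p'\<in>UNIV. \<Sum>q'\<in>UNIV. \<Sum>h\<in>UNIV. \<Sum>f2\<in>UNIV.
      coact m r' k * act r' f1 s' * Sa p' f1 * Sa q' f2 * mu h f2 g * (\<Sum>f\<in>UNIV. de k h f * de f q' p'))"
    unfolding coact_coassoc antipode_comult
    by (simp only: sum_distrib_left sum_distrib_right sum.cartesian_product)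
       (rule sum.reindex_bij_witness[where j="\<lambda>(f,r',h,f1,f2,(p',q'),k). (k,r',f1,p',q',h,f2,f)"
         and i="\<lambda>(k,r',f1,p',q',h,f2,f). (f,r',h,f1,f2,(p',q'),k)"], auto simp: mult_ac)
  also have "\<dots> = (\<Sum>k\<in>UNIV. \<Sum>r'\<in>UNIV. \<Sum>f1\<in>UNIV. \<Sum>p'\<in>UNIV. \<Sum>d\<in>UNIV.
      coact m r' k * act r' f1 s' * Sa p' f1 * de k d p' *
      (\<Sum>h\<in>UNIV. \<Sum>q'\<in>UNIV. \<Sum>f2\<in>UNIV. de d h q' * Sa q' f2 * mu h f2 g))"
    unfolding de_coassoc[symmetric]
    by (simp only: sum_distrib_left sum_distrib_right sum.cartesian_product)
       (rule sum.reindex_bij_witness[where j="\<lambda>(k,r',f1,p',q',h,f2,d). (k,r',f1,p',d,h,q',f2)"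
         and i="\<lambda>(k,r',f1,p',d,h,q',f2). (k,r',f1,p',q',h,f2,d)"], auto simp: mult_ac)
  also have "\<dots> = (\<Sum>k\<in>UNIV. \<Sum>r'\<in>UNIV. \<Sum>f1\<in>UNIV. \<Sum>p'\<in>UNIV.
      coact m r' k * act r' f1 s' * Sa p' f1 * u g * (\<Sum>d\<in>UNIV. de k d p' * eps d))"
    unfolding antipode_right by (simp add: sum_distrib_left mult_ac)
  also have "\<dots> = (\<Sum>k\<in>UNIV. \<Sum>r'\<in>UNIV. \<Sum>f1\<in>UNIV. coact m r' k * act r' f1 s' * Sa k f1 * u g)"
    by (simp add: de_counit_left sum.delta sum.delta')
  also have "\<dots> = coinv_proj m s' * u g"
    unfolding coinv_proj_def by (simp add: sum_distrib_left mult_ac) (rule sum.swap)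
  finally show ?thesis .
qed

lemma coinv_proj_reconstruct:
  "(\<Sum>r\<in>UNIV. \<Sum>f\<in>UNIV. coact m r f * (\<Sum>s\<in>UNIV. coinv_proj r s * act s f t)) = kron m t"
proof -
  have "(\<Sum>r\<in>UNIV. \<Sum>f\<in>UNIV. coact m r f * (\<Sum>s\<in>UNIV. coinv_proj r s * act s f t)) =
      (\<Sum>f\<in>UNIV. \<Sum>r'\<in>UNIV. \<Sum>f'\<in>UNIV. \<Sum>t'\<in>UNIV. Sa f' t' *
        (\<Sum>r\<in>UNIV. coact m r f * coact r r' f') * (\<Sum>s\<in>UNIV. act r' t' s * act s f t))"
    unfolding coinv_proj_def
    by (simp only: sum_distrib_left sum_distrib_right sum.cartesian_product)
       (rule sum.reindex_bij_witness[where j="\<lambda>(r,f,s,r',f',t'). (f,r',f',t',s,r)"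
         and i="\<lambda>(f,r',f',t',s,r). (r,f,s,r',f',t')"], auto simp: mult_ac)
  also have "\<dots> = (\<Sum>r'\<in>UNIV. \<Sum>k\<in>UNIV. \<Sum>h\<in>UNIV. coact m r' k * act r' h t *
      (\<Sum>f'\<in>UNIV. \<Sum>f\<in>UNIV. \<Sum>t'\<in>UNIV. de k f' f * Sa f' t' * mu t' f h))"
    unfolding coact_coassoc act_assoc
    by (simp only: sum_distrib_left sum_distrib_right sum.cartesian_product)
       (rule sum.reindex_bij_witness[where j="\<lambda>(f,r',f',t',h,k). (r',k,h,f',f,t')"
         and i="\<lambda>(r',k,h,f',f,t'). (f,r',f',t',h,k)"], auto simp: mult_ac)
  also have "\<dots> = (\<Sum>r'\<in>UNIV. (\<Sum>k\<in>UNIV. coact m r' k * eps k) * (\<Sum>h\<in>UNIV. u h * act r' h t))"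
    unfolding antipode_left by (simp add: sum_product mult_ac)
  also have "\<dots> = kron m t"
    by (simp add: act_unit coact_counit)
  finally show ?thesis .
qed

lemma nonzero_coinvariant_exists:
  "\<exists>P. P \<noteq> (\<lambda>_. 0) \<and> (\<forall>s' g. (\<Sum>s\<in>UNIV. P s * coact s s' g) = P s' * u g)"
proof -
  have "\<exists>m. coinv_proj m \<noteq> (\<lambda>_. 0)"
  proof (rule ccontr)
    assume "\<nexists>m. coinv_proj m \<noteq> (\<lambda>_. 0)"
    then have "coinv_proj r s = 0" for r s
      by (metis (full_types))
    with coinv_proj_reconstruct[of undefined undefined] show False
      by (simp add: kron_def)
  qed
  then show ?thesis
    using coinv_proj_coinvariant by blast
qed

end

context hopf
begin

text \<open>Coordinates of \<open>H\<close> viewed as a right Hopf module over the dual Hopf algebra \<open>H\<^sup>*\<close>: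
  the coaction is dual to left multiplication of \<open>H\<close>, the action of \<open>H\<^sup>*\<close> is twisted by \<open>S\<close>.
  Its coinvariants are the left integrals of \<open>H\<close>.\<close>

definition dual_act :: "'i \<Rightarrow> 'i \<Rightarrow> 'i \<Rightarrow> 'k" where
  "dual_act m f r = (\<Sum>q\<in>UNIV. de m r q * Sa q f)"

lemma dual_act_assoc:
  "(\<Sum>r\<in>UNIV. dual_act m f r * dual_act r g s) = (\<Sum>h\<in>UNIV. de h f g * dual_act m h s)"
proof -
  have "(\<Sum>h\<in>UNIV. de h f g * dual_act m h s) = (\<Sum>q\<in>UNIV. de m s q * (\<Sum>h\<in>UNIV. Sa q h * de h f g))"
    unfolding dual_act_def
    by (simp add: sum_distrib_left sum_distrib_right mult_ac) (rule sum.swap)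
  also have "\<dots> = (\<Sum>p'\<in>UNIV. \<Sum>q'\<in>UNIV. Sa p' f * Sa q' g * (\<Sum>q\<in>UNIV. de m s q * de q q' p'))"
    unfolding antipode_comult
    by (simp only: sum_distrib_left sum_distrib_right sum.cartesian_product)
       (rule sum.reindex_bij_witness[where j="\<lambda>(q,p',q'). (p',q',q)" and i="\<lambda>(p',q',q). (q,p',q')"],
        auto simp: mult_ac)
  also have "\<dots> = (\<Sum>r\<in>UNIV. dual_act m f r * dual_act r g s)"
    unfolding dual_act_def de_coassoc[symmetric]
    by (simp only: sum_distrib_left sum_distrib_right sum.cartesian_product)
       (rule sum.reindex_bij_witness[where j="\<lambda>(p',q',d). (d,q',p')" and i="\<lambda>(d,q',p'). (p',q',d)"],
        auto simp: mult_ac)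
  finally show ?thesis ..
qed

lemma dual_act_unit: "(\<Sum>f\<in>UNIV. eps f * dual_act m f s) = kron m s"
proof -
  have "(\<Sum>f\<in>UNIV. eps f * dual_act m f s) = (\<Sum>q\<in>UNIV. de m s q * (\<Sum>f\<in>UNIV. Sa q f * eps f))"
    unfolding dual_act_def
    by (simp add: sum_distrib_left sum_distrib_right mult_ac) (rule sum.swap)
  also have "\<dots> = kron m s"
    by (simp only: eps_antipode de_counit_right)
  finally show ?thesis .
qed

lemma dual_act_coact:
  "(\<Sum>r\<in>UNIV. dual_act m f r * mu g r s) =
   (\<Sum>r\<in>UNIV. \<Sum>h\<in>UNIV. \<Sum>f1\<in>UNIV. \<Sum>f2\<in>UNIV. mu h m r * mu f1 f2 f * dual_act r f1 s * de g h f2)"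
proof -
  have "(\<Sum>r\<in>UNIV. \<Sum>h\<in>UNIV. \<Sum>f1\<in>UNIV. \<Sum>f2\<in>UNIV. mu h m r * mu f1 f2 f * dual_act r f1 s * de g h f2) =
    (\<Sum>h\<in>UNIV. \<Sum>f1\<in>UNIV. \<Sum>f2\<in>UNIV. \<Sum>q\<in>UNIV.
      mu f1 f2 f * Sa q f1 * de g h f2 * (\<Sum>r\<in>UNIV. mu h m r * de r s q))"
    unfolding dual_act_def
    by (simp only: sum_distrib_left sum_distrib_right sum.cartesian_product)
       (rule sum.reindex_bij_witness[where j="\<lambda>(r,h,f1,f2,q). (h,f1,f2,q,r)"
         and i="\<lambda>(h,f1,f2,q,r). (r,h,f1,f2,q)"], auto simp: mult_ac)
  also have "\<dots> = (\<Sum>p1\<in>UNIV. \<Sum>p2\<in>UNIV. \<Sum>q2\<in>UNIV. \<Sum>q1\<in>UNIV. \<Sum>f2\<in>UNIV. \<Sum>q\<in>UNIV. \<Sum>f1\<in>UNIV.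
      de m p2 q2 * mu p1 p2 s * mu q1 q2 q * Sa q f1 * mu f1 f2 f * (\<Sum>h\<in>UNIV. de g h f2 * de h p1 q1))"
    unfolding de_mu
    by (simp only: sum_distrib_left sum_distrib_right sum.cartesian_product)
       (rule sum.reindex_bij_witness[where j="\<lambda>(h,f1,f2,q,p1,q1,p2,q2). (p1,p2,q2,q1,f2,q,f1,h)"
         and i="\<lambda>(p1,p2,q2,q1,f2,q,f1,h). (h,f1,f2,q,p1,q1,p2,q2)"], auto simp: mult_ac)
  also have "\<dots> = (\<Sum>p1\<in>UNIV. \<Sum>p2\<in>UNIV. \<Sum>q2\<in>UNIV. \<Sum>h\<in>UNIV.
      de m p2 q2 * mu p1 p2 s * de g p1 h *
      (\<Sum>q1\<in>UNIV. \<Sum>f2\<in>UNIV. \<Sum>q\<in>UNIV. \<Sum>f1\<in>UNIV. de h q1 f2 * mu q1 q2 q * Sa q f1 * mu f1 f2 f))"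
    unfolding de_coassoc
    by (simp only: sum_distrib_left sum_distrib_right sum.cartesian_product)
       (rule sum.reindex_bij_witness[where j="\<lambda>(p1,p2,q2,q1,f2,q,f1,h). (p1,p2,q2,h,q1,f2,q,f1)"
         and i="\<lambda>(p1,p2,q2,h,q1,f2,q,f1). (p1,p2,q2,q1,f2,q,f1,h)"], auto simp: mult_ac)
  also have "\<dots> = (\<Sum>p2\<in>UNIV. \<Sum>q2\<in>UNIV. de m p2 q2 * Sa q2 f * (\<Sum>p1\<in>UNIV. mu p1 p2 s *
      (\<Sum>h\<in>UNIV. de g p1 h * eps h)))"
    unfolding antipode_mult_comult_cancel
    by (simp only: sum_distrib_left sum_distrib_right sum.cartesian_product)
       (rule sum.reindex_bij_witness[where j="\<lambda>(p1,p2,q2,h). (p2,q2,p1,h)"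
         and i="\<lambda>(p2,q2,p1,h). (p1,p2,q2,h)"], auto simp: mult_ac)
  also have "\<dots> = (\<Sum>r\<in>UNIV. dual_act m f r * mu g r s)"
    unfolding dual_act_def de_counit_right by (simp add: sum_distrib_left sum_distrib_right mult_ac)
  finally show ?thesis ..
qed

definition left_integral :: "('i \<Rightarrow> 'k) \<Rightarrow> bool" where
  "left_integral lam \<longleftrightarrow> (\<forall>a c. (\<Sum>b\<in>UNIV. mu a b c * lam b) = eps a * lam c)"

lemma hopf_module_dual_regular:
  "hopf_module (\<lambda>b c a. de a b c) eps (\<lambda>a b c. mu b c a) u (\<lambda>a c. Sa c a) dual_act (\<lambda>m r f. mu f m r)"
proof (rule hopf_module.intro[OF hopf_dual], unfold_locales)
  fix m f g s r
  show "(\<Sum>r\<in>UNIV. dual_act m f r * dual_act r g s) = (\<Sum>h\<in>UNIV. de h f g * dual_act m h s)"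
    by (rule dual_act_assoc)
  show "(\<Sum>f\<in>UNIV. eps f * dual_act m f s) = kron m s"
    by (rule dual_act_unit)
  show "(\<Sum>r\<in>UNIV. mu f m r * mu g r s) = (\<Sum>h\<in>UNIV. mu h m s * mu g f h)"
    using mu_assoc[of g f m s] by (simp add: mult_ac)
  show "(\<Sum>f\<in>UNIV. mu f m r * u f) = kron m r"
    using mu_unit_left[of m r] by (simp add: mult_ac)
  show "(\<Sum>r\<in>UNIV. dual_act m f r * mu g r s) =
    (\<Sum>r\<in>UNIV. \<Sum>h\<in>UNIV. \<Sum>f1\<in>UNIV. \<Sum>f2\<in>UNIV. mu h m r * mu f1 f2 f * dual_act r f1 s * de g h f2)"
    by (rule dual_act_coact)
qed

lemma left_integral_exists: "\<exists>lam. lam \<noteq> (\<lambda>_. 0) \<and> left_integral lam"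
proof -
  obtain P where "P \<noteq> (\<lambda>_. 0)" and P: "\<And>s' g. (\<Sum>s\<in>UNIV. P s * mu g s s') = P s' * eps g"
    using hopf_module.nonzero_coinvariant_exists[OF hopf_module_dual_regular] by blast
  moreover have "left_integral P"
    unfolding left_integral_def using P by (simp add: mult.commute)
  ultimately show ?thesis by blast
qed

end

locale bmod_laws =
  fixes N :: "('b::ring_1, 'm) bmod"
  assumes bmodule: "bmodule N"
begin

lemma mzero_closed [simp]: "mzero N \<in> carrier N"
  and madd_closed [simp]: "x \<in> carrier N \<Longrightarrow> y \<in> carrier N \<Longrightarrow> madd N x y \<in> carrier N"
  and act_closed [simp]: "x \<in> carrier N \<Longrightarrow> act N b x \<in> carrier N"
  and madd_assoc: "x \<in> carrier N \<Longrightarrow> y \<in> carrier N \<Longrightarrow> z \<in> carrier N \<Longrightarrow>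
    madd N (madd N x y) z = madd N x (madd N y z)"
  and madd_comm: "x \<in> carrier N \<Longrightarrow> y \<in> carrier N \<Longrightarrow> madd N x y = madd N y x"
  and madd_zero_left [simp]: "x \<in> carrier N \<Longrightarrow> madd N (mzero N) x = x"
  and madd_inverse: "x \<in> carrier N \<Longrightarrow> \<exists>y\<in>carrier N. madd N x y = mzero N"
  and act_madd: "x \<in> carrier N \<Longrightarrow> y \<in> carrier N \<Longrightarrow> act N b (madd N x y) = madd N (act N b x) (act N b y)"
  and act_add: "x \<in> carrier N \<Longrightarrow> act N (a + b) x = madd N (act N a x) (act N b x)"
  and act_mult: "x \<in> carrier N \<Longrightarrow> act N (a * b) x = act N a (act N b x)"
  and act_one [simp]: "x \<in> carrier N \<Longrightarrow> act N 1 x = x"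
  by (meson bmodule[unfolded bmodule_def])+

lemma madd_zero_right [simp]: "x \<in> carrier N \<Longrightarrow> madd N x (mzero N) = x"
  using madd_comm[of x "mzero N"] by simp

lemma idempotent_eq_mzero:
  assumes "z \<in> carrier N" "madd N z z = z"
  shows "z = mzero N"
proof -
  obtain y where y: "y \<in> carrier N" "madd N z y = mzero N"
    using madd_inverse[OF assms(1)] by blast
  have "madd N (madd N z z) y = madd N z (madd N z y)"
    using madd_assoc y assms(1) by blast
  then show ?thesis using y assms by simp
qed

lemma act_zero [simp]: "x \<in> carrier N \<Longrightarrow> act N 0 x = mzero N"
  using idempotent_eq_mzero[of "act N 0 x"] act_add[of x 0 0] by simp

lemma act_mzero [simp]: "act N b (mzero N) = mzero N"
  using idempotent_eq_mzero[of "act N b (mzero N)"] act_madd[of "mzero N" "mzero N" b] by simp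

definition list_msum :: "'i list \<Rightarrow> ('i \<Rightarrow> 'm) \<Rightarrow> 'm" where
  "list_msum xs f = foldr (\<lambda>i s. madd N (f i) s) xs (mzero N)"

lemma list_msum_simps [simp]:
  "list_msum [] f = mzero N" "list_msum (i # xs) f = madd N (f i) (list_msum xs f)"
  by (simp_all add: list_msum_def)

lemma list_msum_closed [simp]: "(\<And>i. f i \<in> carrier N) \<Longrightarrow> list_msum xs f \<in> carrier N"
  by (induction xs) auto

lemma list_msum_act_const:
  "x \<in> carrier N \<Longrightarrow> list_msum xs (\<lambda>i. act N (c i) x) = act N (sum_list (map c xs)) x"
  by (induction xs) (auto simp: act_add)

lemma act_list_msum:
  "(\<And>i. f i \<in> carrier N) \<Longrightarrow> act N b (list_msum xs f) = list_msum xs (\<lambda>i. act N b (f i))"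
  by (induction xs) (auto simp: act_madd)

lemma list_msum_madd:
  assumes "\<And>i. f i \<in> carrier N" "\<And>i. g i \<in> carrier N"
  shows "list_msum xs (\<lambda>i. madd N (f i) (g i)) = madd N (list_msum xs f) (list_msum xs g)"
proof (induction xs)
  case (Cons a xs)
  let ?F = "list_msum xs f" and ?G = "list_msum xs g"
  have closed: "?F \<in> carrier N" "?G \<in> carrier N" "f a \<in> carrier N" "g a \<in> carrier N"
    using assms by auto
  have "list_msum (a # xs) (\<lambda>i. madd N (f i) (g i)) = madd N (madd N (f a) (g a)) (madd N ?F ?G)"
    using Cons by simp
  also have "\<dots> = madd N (f a) (madd N (g a) (madd N ?F ?G))"
    using closed madd_assoc by simp
  also have "madd N (g a) (madd N ?F ?G) = madd N ?F (madd N (g a) ?G)"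
    using closed by (simp add: madd_comm[of "g a" ?F] flip: madd_assoc)
  also have "madd N (f a) (madd N ?F (madd N (g a) ?G)) = madd N (madd N (f a) ?F) (madd N (g a) ?G)"
    using closed madd_assoc by simp
  finally show ?case by simp
qed simp

lemma list_msum_mzero [simp]: "list_msum xs (\<lambda>i. mzero N) = mzero N"
  by (induction xs) auto

lemma list_msum_swap:
  "(\<And>i j. F i j \<in> carrier N) \<Longrightarrow>
   list_msum xs (\<lambda>i. list_msum ys (F i)) = list_msum ys (\<lambda>j. list_msum xs (\<lambda>i. F i j))"
proof (induction xs)
  case (Cons a xs)
  then show ?case
    by (simp add: list_msum_madd[symmetric])
qed simp

lemma list_msum_delta:
  "distinct xs \<Longrightarrow> c \<in> set xs \<Longrightarrow> y \<in> carrier N \<Longrightarrow>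
   list_msum xs (\<lambda>j. if j = c then y else mzero N) = y"
proof (induction xs)
  case (Cons a xs)
  show ?case
  proof (cases "a = c")
    case True
    with Cons.prems have "c \<notin> set xs" by simp
    then have "list_msum xs (\<lambda>j. if j = c then y else mzero N) = mzero N"
      by (induction xs) auto
    with True Cons.prems show ?thesis by simp
  qed (use Cons in simp)
qed simp

end

lemma enum_idx: "distinct (enum_idx :: 'i::finite list) \<and> set (enum_idx :: 'i list) = UNIV"
proof -
  obtain xs :: "'i list" where "distinct xs \<and> set xs = UNIV"
    using finite_distinct_list[OF finite_UNIV] by metis
  then show ?thesis
    unfolding enum_idx_def by (rule someI)
qed

context bmod_laws
begin

lemma msum_eq_list_msum: "msum N f = list_msum enum_idx f"
  by (simp add: msum_def list_msum_def)

lemma msum_closed [simp]: "(\<And>i. f i \<in> carrier N) \<Longrightarrow> msum N f \<in> carrier N"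
  by (simp add: msum_eq_list_msum)

lemma msum_act_const: "x \<in> carrier N \<Longrightarrow> msum N (\<lambda>i. act N (c i) x) = act N (\<Sum>i\<in>UNIV. c i) x"
  by (simp add: msum_eq_list_msum list_msum_act_const sum_list_distinct_conv_sum_set enum_idx)

lemma act_msum: "(\<And>i. f i \<in> carrier N) \<Longrightarrow> act N b (msum N f) = msum N (\<lambda>i. act N b (f i))"
  by (simp add: msum_eq_list_msum act_list_msum)

lemma msum_madd:
  "(\<And>i. f i \<in> carrier N) \<Longrightarrow> (\<And>i. g i \<in> carrier N) \<Longrightarrow>
   msum N (\<lambda>i. madd N (f i) (g i)) = madd N (msum N f) (msum N g)"
  by (simp add: msum_eq_list_msum list_msum_madd)

lemma msum_swap:
  "(\<And>i j. F i j \<in> carrier N) \<Longrightarrow>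
   msum N (\<lambda>i. msum N (F i)) = msum N (\<lambda>j. msum N (\<lambda>i. F i j))"
  unfolding msum_eq_list_msum by (rule list_msum_swap)

lemma msum_delta: "y \<in> carrier N \<Longrightarrow> msum N (\<lambda>j::'i::finite. if j = c then y else mzero N) = y"
  by (simp add: msum_eq_list_msum list_msum_delta enum_idx)

lemma msum_collect_coeffs:
  assumes "\<And>j. x j \<in> carrier N"
  shows "msum N (\<lambda>i. msum N (\<lambda>j. act N (F i j) (x j))) = msum N (\<lambda>j. act N (\<Sum>i\<in>UNIV. F i j) (x j))"
proof -
  have "msum N (\<lambda>i. msum N (\<lambda>j. act N (F i j) (x j))) = msum N (\<lambda>j. msum N (\<lambda>i. act N (F i j) (x j)))"
    using assms by (intro msum_swap) simp
  also have "\<dots> = msum N (\<lambda>j. act N (\<Sum>i\<in>UNIV. F i j) (x j))"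
    using assms by (simp add: msum_act_const)
  finally show ?thesis .
qed

lemma act_msum_act:
  "(\<And>j. x j \<in> carrier N) \<Longrightarrow> act N b (msum N (\<lambda>j. act N (c j) (x j))) = msum N (\<lambda>j. act N (b * c j) (x j))"
  by (simp add: act_msum act_mult)

end

section \<open>Comodule algebras and the module \<open>N \<otimes> H\<close>\<close>

locale k_alg =
  fixes scB :: "'k::field \<Rightarrow> 'b::ring_1 \<Rightarrow> 'b"
  assumes k_algebra: "k_algebra scB"
begin

lemma sc_add_right: "scB c (x + y) = scB c x + scB c y"
  and sc_add_left: "scB (c + d) x = scB c x + scB d x"
  and sc_sc: "scB (c * d) x = scB c (scB d x)"
  and sc_one [simp]: "scB 1 x = x"
  and sc_mult_left: "scB c (x * y) = scB c x * y"
  and sc_mult_right: "scB c (x * y) = x * scB c y"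
  by (meson k_algebra[unfolded k_algebra_def])+

lemma sc_zero_left [simp]: "scB 0 x = 0"
  using sc_add_left[of 0 0 x] by simp

lemma sc_zero_right [simp]: "scB c 0 = 0"
  using sc_add_right[of c 0 0] by simp

lemma sc_sum_left: "scB (\<Sum>i\<in>A. f i) x = (\<Sum>i\<in>A. scB (f i) x)"
  by (induction A rule: infinite_finite_induct) (auto simp: sc_add_left)

lemma sc_sum_right: "scB c (\<Sum>i\<in>A. f i) = (\<Sum>i\<in>A. scB c (f i))"
  by (induction A rule: infinite_finite_induct) (auto simp: sc_add_right)

lemma sc_mult_sc: "scB c x * scB d y = scB (c * d) (x * y)"
  by (metis sc_mult_left sc_mult_right sc_sc)

end

locale comodule_alg = hopf mu u de eps Sa + k_alg scB
  for mu :: "'i::finite \<Rightarrow> 'i \<Rightarrow> 'i \<Rightarrow> 'k::field" and u de eps Sa and scB :: "'k \<Rightarrow> 'b::ring_1 \<Rightarrow> 'b" +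
  fixes dB :: "'b \<Rightarrow> 'i \<Rightarrow> 'b"
  assumes comodule_algebra: "comodule_algebra scB mu u de eps dB"
begin

lemma dB_add: "dB (x + y) i = dB x i + dB y i"
  and dB_mult: "dB (x * y) r = (\<Sum>i\<in>UNIV. \<Sum>j\<in>UNIV. scB (mu i j r) (dB x i * dB y j))"
  and dB_one: "dB 1 r = scB (u r) 1"
  and dB_counit: "(\<Sum>i\<in>UNIV. scB (eps i) (dB x i)) = x"
  using comodule_algebra unfolding comodule_algebra_def by simp_all

text \<open>The matrix of \<open>b\<close> acting on \<open>N \<otimes> H\<close>: \<open>(b \<cdot> x)\<^sub>c = \<Sum>\<^sub>j tens_coeff b c j \<cdot> x\<^sub>j\<close>.\<close>

definition tens_coeff :: "'b \<Rightarrow> 'i \<Rightarrow> 'i \<Rightarrow> 'b" where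
  "tens_coeff b c j = (\<Sum>i\<in>UNIV. scB (mu i j c) (dB b i))"

lemma tens_coeff_mult: "tens_coeff (a * b) c l = (\<Sum>j\<in>UNIV. tens_coeff a c j * tens_coeff b j l)"
proof -
  have "tens_coeff (a * b) c l =
      (\<Sum>k\<in>UNIV. \<Sum>m\<in>UNIV. \<Sum>i\<in>UNIV. scB (mu k m i * mu i l c) (dB a k * dB b m))"
    unfolding tens_coeff_def dB_mult
    by (simp only: sc_sum_right sc_sc[symmetric] sum.cartesian_product)
       (rule sum.reindex_bij_witness[where j="\<lambda>(i,k,m). (k,m,i)" and i="\<lambda>(k,m,i). (i,k,m)"],
        auto simp: mult_ac sc_sc[symmetric])
  also have "\<dots> = (\<Sum>k\<in>UNIV. \<Sum>m\<in>UNIV. scB (\<Sum>j\<in>UNIV. mu m l j * mu k j c) (dB a k * dB b m))"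
    by (simp only: mu_assoc[symmetric] sc_sum_left)
  also have "\<dots> = (\<Sum>j\<in>UNIV. tens_coeff a c j * tens_coeff b j l)"
    unfolding tens_coeff_def
    by (simp only: sc_sum_left sum_distrib_left sum_distrib_right sc_mult_sc sum.cartesian_product)
       (rule sum.reindex_bij_witness[where j="\<lambda>(k,m,j). (j,m,k)" and i="\<lambda>(j,m,k). (k,m,j)"],
        auto simp: mult_ac)
  finally show ?thesis .
qed

lemma tens_coeff_one: "tens_coeff 1 c j = scB (kron j c) 1"
  unfolding tens_coeff_def dB_one
  by (simp add: sc_sc[symmetric] mult_ac flip: sc_sum_left mu_unit_left)

lemma tens_coeff_add: "tens_coeff (a + b) c j = tens_coeff a c j + tens_coeff b c j"
  unfolding tens_coeff_def dB_add sc_add_right by (simp add: sum.distrib)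

lemma counit_tens_coeff: "(\<Sum>c\<in>UNIV. scB (eps c) 1 * tens_coeff b c j) = b * scB (eps j) 1"
proof -
  have "(\<Sum>c\<in>UNIV. scB (eps c) 1 * tens_coeff b c j) = (\<Sum>i\<in>UNIV. scB (\<Sum>c\<in>UNIV. mu i j c * eps c) (dB b i))"
    unfolding tens_coeff_def
    by (simp add: sc_sum_left sum_distrib_left sc_mult_sc mult_ac) (rule sum.swap)
  also have "\<dots> = scB (eps j) b"
    by (simp add: eps_mu sc_sc mult.commute[of "eps _" "eps j"] dB_counit flip: sc_sum_right)
  also have "\<dots> = b * scB (eps j) 1"
    using sc_mult_right[of "eps j" b 1] by simp
  finally show ?thesis .
qed

lemma tens_coeff_left_integral:
  assumes "left_integral lam"
  shows "(\<Sum>j\<in>UNIV. tens_coeff b c j * scB (lam j) 1) = scB (lam c) 1 * b"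
proof -
  have "(\<Sum>j\<in>UNIV. tens_coeff b c j * scB (lam j) 1) = (\<Sum>i\<in>UNIV. scB (\<Sum>j\<in>UNIV. mu i j c * lam j) (dB b i))"
    unfolding tens_coeff_def
    by (simp add: sc_sum_left sum_distrib_right sc_mult_sc mult_ac) (rule sum.swap)
  also have "\<dots> = scB (lam c) b"
    using assms unfolding left_integral_def
    by (simp add: sc_sc mult.commute[of "eps _" "lam c"] dB_counit flip: sc_sum_right)
  also have "\<dots> = scB (lam c) 1 * b"
    using sc_mult_left[of "lam c" 1 b] by simp
  finally show ?thesis .
qed

end

lemma tensH_simps:
  "carrier (tensH scB mu dB N) = {x. \<forall>i. x i \<in> carrier N}"
  "madd (tensH scB mu dB N) x y = (\<lambda>i. madd N (x i) (y i))"
  "mzero (tensH scB mu dB N) = (\<lambda>i. mzero N)"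
  by (simp_all add: tensH_def)

context comodule_alg
begin

abbreviation tensor_H :: "('b, 'n) bmod \<Rightarrow> ('b, 'i \<Rightarrow> 'n) bmod" where
  "tensor_H N \<equiv> tensH scB mu dB N"

lemma act_tensH:
  assumes "bmodule N" "\<And>j. x j \<in> carrier N"
  shows "act (tensor_H N) b x c = msum N (\<lambda>j. act N (tens_coeff b c j) (x j))"
proof -
  interpret bmod_laws N by (rule bmod_laws.intro) fact
  show ?thesis
    unfolding tensH_def tens_coeff_def using msum_collect_coeffs[OF assms(2)] by simp
qed

lemma act_tensH_mult:
  assumes "bmodule N" "x \<in> carrier (tensor_H N)"
  shows "act (tensor_H N) (a * b) x = act (tensor_H N) a (act (tensor_H N) b x)"
proof
  interpret bmod_laws N by (rule bmod_laws.intro) fact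
  fix c
  have x: "\<And>j. x j \<in> carrier N" using assms(2) by (simp add: tensH_simps)
  have "act (tensor_H N) a (act (tensor_H N) b x) c =
      msum N (\<lambda>j. act N (tens_coeff a c j) (msum N (\<lambda>l. act N (tens_coeff b j l) (x l))))"
    using x by (simp add: act_tensH[OF assms(1)])
  also have "\<dots> = msum N (\<lambda>j. msum N (\<lambda>l. act N (tens_coeff a c j * tens_coeff b j l) (x l)))"
    using x by (simp add: act_msum_act)
  also have "\<dots> = act (tensor_H N) (a * b) x c"
    using x by (simp add: msum_collect_coeffs tens_coeff_mult act_tensH[OF assms(1)])
  finally show "act (tensor_H N) (a * b) x c = act (tensor_H N) a (act (tensor_H N) b x) c" ..
qed

lemma act_tensH_one:
  assumes "bmodule N" "x \<in> carrier (tensor_H N)"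
  shows "act (tensor_H N) 1 x = x"
proof
  interpret bmod_laws N by (rule bmod_laws.intro) fact
  fix c
  have x: "\<And>j. x j \<in> carrier N" using assms(2) by (simp add: tensH_simps)
  have "act (tensor_H N) 1 x c = msum N (\<lambda>j. if j = c then x c else mzero N)"
    using x by (auto simp: act_tensH[OF assms(1)] tens_coeff_one kron_def intro!: arg_cong[where f="msum N"])
  also have "\<dots> = x c"
    using x by (simp add: msum_delta)
  finally show "act (tensor_H N) 1 x c = x c" .
qed

lemma bmodule_tensH:
  assumes "bmodule N"
  shows "bmodule (tensor_H N)"
proof -
  interpret bmod_laws N by (rule bmod_laws.intro) fact
  have inverse: "\<exists>y\<in>carrier (tensor_H N). madd (tensor_H N) x y = mzero (tensor_H N)"
    if "x \<in> carrier (tensor_H N)" for x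
  proof -
    have "\<forall>i. \<exists>y\<in>carrier N. madd N (x i) y = mzero N"
      using that madd_inverse by (simp add: tensH_simps)
    then obtain y where "\<And>i. y i \<in> carrier N \<and> madd N (x i) (y i) = mzero N"
      by metis
    then show ?thesis
      by (intro bexI[of _ y]) (auto simp: tensH_simps)
  qed
  show ?thesis
    unfolding bmodule_def
    using inverse act_tensH_mult[OF assms] act_tensH_one[OF assms]
    by (auto simp: tensH_simps act_tensH[OF assms] madd_assoc act_madd act_add
        msum_madd tens_coeff_add intro!: ext intro: madd_comm)
qed

end

context comodule_alg
begin

text \<open>\<open>N \<otimes> H \<rightarrow> N\<close>, \<open>n \<otimes> h \<mapsto> \<epsilon>(h) n\<close>, split (as a map of sets) by \<open>n \<mapsto> n \<otimes> 1\<close>.\<close>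

definition counit_proj :: "('b, 'n) bmod \<Rightarrow> ('i \<Rightarrow> 'n) \<Rightarrow> 'n" where
  "counit_proj N x = msum N (\<lambda>c. act N (scB (eps c) 1) (x c))"

lemma bhom_counit_proj:
  assumes "bmodule N"
  shows "bhom (tensor_H N) N (counit_proj N)"
  unfolding bhom_def
proof (intro conjI ballI allI)
  interpret bmod_laws N by (rule bmod_laws.intro) fact
  fix x y b
  assume "x \<in> carrier (tensor_H N)"
  then have x: "\<And>j. x j \<in> carrier N" by (simp add: tensH_simps)
  then show "counit_proj N x \<in> carrier N"
    by (simp add: counit_proj_def)
  assume "y \<in> carrier (tensor_H N)"
  then show "counit_proj N (madd (tensor_H N) x y) = madd N (counit_proj N x) (counit_proj N y)"
    using x by (simp add: counit_proj_def tensH_simps act_madd msum_madd)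
  have "counit_proj N (act (tensor_H N) b x) =
      msum N (\<lambda>c. msum N (\<lambda>j. act N (scB (eps c) 1 * tens_coeff b c j) (x j)))"
    using x by (simp add: counit_proj_def act_tensH[OF assms] act_msum_act)
  also have "\<dots> = act N b (counit_proj N x)"
    using x by (simp add: msum_collect_coeffs counit_tens_coeff act_msum_act counit_proj_def)
  finally show "counit_proj N (act (tensor_H N) b x) = act N b (counit_proj N x)" .
qed

lemma counit_proj_surj:
  assumes "bmodule N"
  shows "counit_proj N ` carrier (tensor_H N) = carrier N"
proof -
  interpret bmod_laws N by (rule bmod_laws.intro) fact
  have "m = counit_proj N (\<lambda>c. act N (scB (u c) 1) m)" if "m \<in> carrier N" for m
  proof -
    have "counit_proj N (\<lambda>c. act N (scB (u c) 1) m) = msum N (\<lambda>c. act N (scB (eps c) 1 * scB (u c) 1) m)"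
      using that by (simp add: counit_proj_def act_mult)
    also have "\<dots> = act N (scB (\<Sum>c\<in>UNIV. u c * eps c) 1) m"
      using that by (simp add: msum_act_const sc_mult_sc sc_sum_left mult.commute)
    finally show ?thesis
      using that by (simp add: eps_unit)
  qed
  moreover have "(\<lambda>c. act N (scB (u c) 1) m) \<in> carrier (tensor_H N)" if "m \<in> carrier N" for m
    using that by (simp add: tensH_simps)
  ultimately show ?thesis
    using bhom_counit_proj[OF assms] unfolding bhom_def by blast
qed

text \<open>\<open>N \<rightarrow> N \<otimes> H\<close>, \<open>n \<mapsto> n \<otimes> \<Lambda>\<close> for a left integral \<open>\<Lambda> = \<Sum>\<^sub>j lam j e\<^sub>j\<close>; it is
  \<open>B\<close>-linear because \<open>b\<^sub>1 n \<otimes> b\<^sub>2 \<Lambda> = b\<^sub>1 n \<otimes> \<epsilon>(b\<^sub>2) \<Lambda> = b n \<otimes> \<Lambda>\<close>.\<close>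

definition integral_emb :: "('b, 'n) bmod \<Rightarrow> ('i \<Rightarrow> 'k) \<Rightarrow> 'n \<Rightarrow> 'i \<Rightarrow> 'n" where
  "integral_emb N lam n = (\<lambda>j. act N (scB (lam j) 1) n)"

lemma bhom_integral_emb:
  assumes "bmodule N" "left_integral lam"
  shows "bhom N (tensor_H N) (integral_emb N lam)"
  unfolding bhom_def
proof (intro conjI ballI allI)
  interpret bmod_laws N by (rule bmod_laws.intro) fact
  fix x y b
  assume x: "x \<in> carrier N"
  then show "integral_emb N lam x \<in> carrier (tensor_H N)"
    by (simp add: tensH_simps integral_emb_def)
  assume "y \<in> carrier N"
  then show "integral_emb N lam (madd N x y) = madd (tensor_H N) (integral_emb N lam x) (integral_emb N lam y)"
    using x by (simp add: tensH_simps integral_emb_def act_madd)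
  show "integral_emb N lam (act N b x) = act (tensor_H N) b (integral_emb N lam x)"
  proof
    fix c
    have "act (tensor_H N) b (integral_emb N lam x) c = act N (\<Sum>j\<in>UNIV. tens_coeff b c j * scB (lam j) 1) x"
      using x by (simp add: act_tensH[OF assms(1)] integral_emb_def msum_act_const flip: act_mult)
    then show "integral_emb N lam (act N b x) c = act (tensor_H N) b (integral_emb N lam x) c"
      using x by (simp add: tens_coeff_left_integral[OF assms(2)] integral_emb_def act_mult)
  qed
qed

lemma inj_on_integral_emb:
  assumes "bmodule N" "lam \<noteq> (\<lambda>_. 0)"
  shows "inj_on (integral_emb N lam) (carrier N)"
proof -
  interpret bmod_laws N by (rule bmod_laws.intro) fact
  obtain c where c: "lam c \<noteq> 0" using assms(2) by auto
  have "act N (scB (inverse (lam c)) 1) (integral_emb N lam n c) = n" if "n \<in> carrier N" for n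
    using c that by (simp add: integral_emb_def sc_mult_sc flip: act_mult)
  then show ?thesis
    by (rule inj_on_inverseI[where g="\<lambda>v. act N (scB (inverse (lam c)) 1) (v c)"])
qed

end

section \<open>Projective and injective modules\<close>

lemma bhom_comp: "bhom A B f \<Longrightarrow> bhom B C g \<Longrightarrow> bhom A C (\<lambda>x. g (f x))"
  unfolding bhom_def by auto

definition transport_bmod :: "('a \<Rightarrow> 'u) \<Rightarrow> ('b, 'a) bmod \<Rightarrow> ('b, 'u) bmod" where
  "transport_bmod e X =
    \<lparr> carrier = e ` carrier X, madd = (\<lambda>x y. e (madd X (inv e x) (inv e y))),
      mzero = e (mzero X), act = (\<lambda>b x. e (act X b (inv e x))) \<rparr>"

lemma transport_bmod_simps:
  "carrier (transport_bmod e X) = e ` carrier X"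
  "madd (transport_bmod e X) x y = e (madd X (inv e x) (inv e y))"
  "mzero (transport_bmod e X) = e (mzero X)"
  "act (transport_bmod e X) b x = e (act X b (inv e x))"
  by (simp_all add: transport_bmod_def)

lemma
  assumes e: "inj e" and X: "bmodule (X :: ('b::ring_1, 'a) bmod)"
  shows bmodule_transport_bmod: "bmodule (transport_bmod e X)"
    and bhom_into_transport_bmod: "bhom X (transport_bmod e X) e"
    and bhom_from_transport_bmod: "bhom (transport_bmod e X) X (inv e)"
proof -
  interpret bmod_laws X by (rule bmod_laws.intro) fact
  have inv_e [simp]: "inv e (e x) = x" for x
    using e by (simp add: inv_f_f)
  have comm: "x \<in> carrier X \<Longrightarrow> y \<in> carrier X \<Longrightarrow> e (madd X x y) = e (madd X y x)" for x y
    using madd_comm by metis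
  show "bmodule (transport_bmod e X)"
    unfolding bmodule_def transport_bmod_simps
  proof (intro conjI ballI allI)
    fix x assume "x \<in> e ` carrier X"
    then obtain x' where x': "x' \<in> carrier X" "x = e x'" by blast
    then obtain y where "y \<in> carrier X" "madd X x' y = mzero X"
      using madd_inverse by blast
    then show "\<exists>y\<in>e ` carrier X. e (madd X (inv e x) (inv e y)) = e (mzero X)"
      using x' by (intro bexI[of _ "e y"]) auto
  qed (auto simp: madd_assoc act_madd act_add act_mult comm)
  show "bhom X (transport_bmod e X) e" "bhom (transport_bmod e X) X (inv e)"
    unfolding bhom_def transport_bmod_simps by auto
qed

text \<open>The lifting and extension properties, which quantify over modules carried by \<open>'u\<close>,
  apply to all modules whose carrier type embeds into \<open>'u\<close>.\<close>

lemma projective_mod_lift: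
  fixes X :: "('b::ring_1, 'x) bmod" and Y :: "('b, 'y) bmod"
    and eX :: "'x \<Rightarrow> 'u" and eY :: "'y \<Rightarrow> 'u"
  assumes P: "projective_mod TYPE('u) P" and eX: "inj eX" and eY: "inj eY"
    and X: "bmodule X" and Y: "bmodule Y"
    and p: "bhom X Y p" "p ` carrier X = carrier Y" and f: "bhom P Y f"
  obtains h where "bhom P X h" "\<And>x. x \<in> carrier P \<Longrightarrow> p (h x) = f x"
proof -
  let ?p = "\<lambda>x. eY (p (inv eX x))"
  have p': "bhom (transport_bmod eX X) (transport_bmod eY Y) ?p"
    by (rule bhom_comp[OF bhom_from_transport_bmod[OF eX X] bhom_comp[OF p(1) bhom_into_transport_bmod[OF eY Y]]])
  have p'_surj: "?p ` carrier (transport_bmod eX X) = carrier (transport_bmod eY Y)"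
  proof -
    have "?p ` carrier (transport_bmod eX X) = eY ` p ` carrier X"
      using eX by (simp add: transport_bmod_simps image_image inv_f_f)
    then show ?thesis
      using p(2) by (simp add: transport_bmod_simps)
  qed
  have f': "bhom P (transport_bmod eY Y) (\<lambda>x. eY (f x))"
    by (rule bhom_comp[OF f bhom_into_transport_bmod[OF eY Y]])
  obtain h where
    h: "bhom P (transport_bmod eX X) h" "\<And>x. x \<in> carrier P \<Longrightarrow> ?p (h x) = eY (f x)"
    using P[unfolded projective_mod_def, rule_format, OF conjI[OF bmodule_transport_bmod[OF eX X]
        conjI[OF bmodule_transport_bmod[OF eY Y] conjI[OF p' conjI[OF p'_surj f']]]]]
    by blast
  show thesis
  proof
    show "bhom P X (\<lambda>x. inv eX (h x))"
      by (rule bhom_comp[OF h(1) bhom_from_transport_bmod[OF eX X]])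
    show "p (inv eX (h x)) = f x" if "x \<in> carrier P" for x
      using h(2)[OF that] eY by (simp add: inj_eq)
  qed
qed

lemma injective_mod_extend:
  fixes X :: "('b::ring_1, 'x) bmod" and Y :: "('b, 'y) bmod"
    and eX :: "'x \<Rightarrow> 'u" and eY :: "'y \<Rightarrow> 'u"
  assumes E: "injective_mod TYPE('u) E" and eX: "inj eX" and eY: "inj eY"
    and X: "bmodule X" and Y: "bmodule Y"
    and i: "bhom X Y i" "inj_on i (carrier X)" and f: "bhom X E f"
  obtains h where "bhom Y E h" "\<And>x. x \<in> carrier X \<Longrightarrow> h (i x) = f x"
proof -
  let ?i = "\<lambda>x. eY (i (inv eX x))"
  have i': "bhom (transport_bmod eX X) (transport_bmod eY Y) ?i"
    by (rule bhom_comp[OF bhom_from_transport_bmod[OF eX X] bhom_comp[OF i(1) bhom_into_transport_bmod[OF eY Y]]])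
  have i'_inj: "inj_on ?i (carrier (transport_bmod eX X))"
  proof (rule inj_onI)
    fix x y
    assume "x \<in> carrier (transport_bmod eX X)" "y \<in> carrier (transport_bmod eX X)" "?i x = ?i y"
    then show "x = y"
      using eX eY i(2) by (auto simp: transport_bmod_simps inj_eq dest: inj_onD)
  qed
  have f': "bhom (transport_bmod eX X) E (\<lambda>x. f (inv eX x))"
    by (rule bhom_comp[OF bhom_from_transport_bmod[OF eX X] f])
  obtain h where h: "bhom (transport_bmod eY Y) E h"
      "\<And>x. x \<in> carrier (transport_bmod eX X) \<Longrightarrow> h (?i x) = f (inv eX x)"
    using E[unfolded injective_mod_def, rule_format, OF conjI[OF bmodule_transport_bmod[OF eX X]
        conjI[OF bmodule_transport_bmod[OF eY Y] conjI[OF i' conjI[OF i'_inj f']]]]]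
    by blast
  show thesis
  proof
    show "bhom Y E (\<lambda>y. h (eY y))"
      by (rule bhom_comp[OF bhom_into_transport_bmod[OF eY Y] h(1)])
    show "h (eY (i x)) = f x" if "x \<in> carrier X" for x
      using h(2)[of "eX x"] that eX by (simp add: transport_bmod_simps inv_f_f)
  qed
qed

lemma bhom_id: "bhom M M (\<lambda>x. x)"
  by (simp add: bhom_def)

lemma inj_comp_const: "inj e \<Longrightarrow> inj (\<lambda>m. e (\<lambda>_. m))"
  by (auto simp: inj_def dest: fun_cong)

context comodule_alg
begin

lemma in_NH_if_retract:
  fixes M N :: "('b, 'm) bmod"
  assumes "bmodule N" "bhom M (tensor_H N) g" "bhom (tensor_H N) M h"
    and "\<And>x. x \<in> carrier M \<Longrightarrow> h (g x) = x"
  shows "in_NH scB mu dB M"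
  unfolding in_NH_def nullhom_def
  using assms by (intro exI[of _ N] exI[of _ g] exI[of _ h]) auto

lemma projective_in_NH:
  fixes M :: "('b, 'm) bmod" and e :: "('i \<Rightarrow> 'm) \<Rightarrow> 'u"
  assumes M: "bmodule M" and e: "inj e" and P: "projective_mod TYPE('u) M"
  shows "in_NH scB mu dB M"
proof -
  obtain h where "bhom M (tensor_H M) h" "\<And>x. x \<in> carrier M \<Longrightarrow> counit_proj M (h x) = x"
    using projective_mod_lift[OF P e inj_comp_const[OF e] bmodule_tensH[OF M] M
        bhom_counit_proj[OF M] counit_proj_surj[OF M] bhom_id] by blast
  then show ?thesis
    using in_NH_if_retract[OF M] bhom_counit_proj[OF M] by blast
qed

lemma injective_in_NH:
  fixes M :: "('b, 'm) bmod" and e :: "('i \<Rightarrow> 'm) \<Rightarrow> 'u"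
  assumes M: "bmodule M" and e: "inj e" and I: "injective_mod TYPE('u) M"
  shows "in_NH scB mu dB M"
proof -
  obtain lam where lam: "lam \<noteq> (\<lambda>_. 0)" "left_integral lam"
    using left_integral_exists by blast
  obtain h where "bhom (tensor_H M) M h" "\<And>x. x \<in> carrier M \<Longrightarrow> h (integral_emb M lam x) = x"
    using injective_mod_extend[OF I inj_comp_const[OF e] e M bmodule_tensH[OF M]
        bhom_integral_emb[OF M lam(2)] inj_on_integral_emb[OF M lam(1)] bhom_id] by blast
  then show ?thesis
    using in_NH_if_retract[OF M] bhom_integral_emb[OF M lam(2)] by blast
qed

end

lemma zero_bmod_simps:
  "carrier (zero_bmod M) = {mzero M}" "madd (zero_bmod M) = (\<lambda>x y. mzero M)"
  "mzero (zero_bmod M) = mzero M" "act (zero_bmod M) = (\<lambda>b x. mzero M)"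
  by (simp_all add: zero_bmod_def)

lemma bmodule_zero_bmod: "bmodule (zero_bmod M)"
  unfolding bmodule_def zero_bmod_simps by auto

lemma msum_zero_bmod: "msum (zero_bmod M) (f :: 'i::finite \<Rightarrow> 'm) = mzero M"
proof -
  have "foldr (\<lambda>i y. mzero M) xs (mzero M) = mzero M" for xs :: "'i list"
    by (induction xs) simp_all
  then show ?thesis
    unfolding msum_def zero_bmod_simps .
qed

lemma nullhom_zero_bmod:
  assumes "f (mzero M) = mzero M"
  shows "nullhom scB mu dB (zero_bmod M) (zero_bmod M) f"
  unfolding nullhom_def
proof (intro exI conjI)
  let ?Z = "zero_bmod M"
  show "bmodule ?Z"
    by (rule bmodule_zero_bmod)
  show "bhom ?Z (tensH scB mu dB ?Z) (\<lambda>x i. mzero M)"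
    unfolding bhom_def by (auto simp: zero_bmod_simps tensH_simps tensH_def msum_zero_bmod)
  show "bhom (tensH scB mu dB ?Z) ?Z (\<lambda>x. mzero M)"
    unfolding bhom_def by (auto simp: zero_bmod_simps)
  show "\<forall>x\<in>carrier ?Z. f x = mzero M"
    using assms by (simp add: zero_bmod_simps)
qed

text \<open>In \<open>\<C>(B,H)\<close> both composites \<open>0 \<rightarrow> M \<rightarrow> 0\<close> and \<open>M \<rightarrow> 0 \<rightarrow> M\<close> are congruent to the
  identity: the latter because \<open>-id\<^sub>M\<close> factors through \<open>N \<otimes> H\<close> whenever \<open>id\<^sub>M\<close> does.\<close>

lemma in_NH_imp_iso_zero_C:
  fixes M :: "('b::ring_1, 'm) bmod"
  assumes M: "bmodule M" and NH: "in_NH scB mu dB M"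
  shows "iso_zero_C scB mu dB M"
proof -
  interpret bmod_laws M by (rule bmod_laws.intro) fact
  obtain N :: "('b, 'm) bmod" and g h where N: "bmodule N"
    and g: "bhom M (tensH scB mu dB N) g" and h: "bhom (tensH scB mu dB N) M h"
    and hg: "\<forall>x\<in>carrier M. id x = h (g x)"
    using NH unfolding in_NH_def nullhom_def by blast
  have neg: "bhom M M (act M (- 1))"
    unfolding bhom_def by (auto simp: act_madd simp flip: act_mult)
  have "nullhom scB mu dB M M (\<lambda>x. madd M (mzero M) (act M (- 1) x))"
    unfolding nullhom_def
    by (intro exI[of _ N] exI[of _ g] exI[of _ "\<lambda>y. act M (- 1) (h y)"] conjI N g bhom_comp[OF h neg])
       (use hg in simp)
  moreover have "nullhom scB mu dB (zero_bmod M) (zero_bmod M) (\<lambda>x. madd (zero_bmod M) y (act (zero_bmod M) (- 1) x))" for y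
    by (rule nullhom_zero_bmod) (simp add: zero_bmod_simps)
  moreover have "bhom M (zero_bmod M) (\<lambda>x. mzero M)" "bhom (zero_bmod M) M (\<lambda>x. mzero M)"
    unfolding bhom_def by (simp_all add: zero_bmod_simps)
  ultimately show ?thesis
    unfolding iso_zero_C_def by blast
qed

theorem corollary2p8:
  fixes mu :: "'i::finite \<Rightarrow> 'i \<Rightarrow> 'i \<Rightarrow> 'k::field"
    and u :: "'i \<Rightarrow> 'k" and de :: "'i \<Rightarrow> 'i \<Rightarrow> 'i \<Rightarrow> 'k"
    and eps :: "'i \<Rightarrow> 'k" and Sa :: "'i \<Rightarrow> 'i \<Rightarrow> 'k"
    and scB :: "'k \<Rightarrow> 'b::ring_1 \<Rightarrow> 'b" and dB :: "'b \<Rightarrow> 'i \<Rightarrow> 'b"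
    and M :: "('b, 'm) bmod"
  assumes "hopf_algebra mu u de eps Sa"
    and "k_algebra scB"
    and "comodule_algebra scB mu u de eps dB"
    and "bmodule M"
    and "\<exists>f :: ('i \<Rightarrow> 'm) \<Rightarrow> 'u. inj f"
    and "\<exists>g :: ('m \<Rightarrow> 'b) \<Rightarrow> 'u. inj g"
    and "projective_mod TYPE('u) M \<or> injective_mod TYPE('u) M"
  shows "in_NH scB mu dB M \<and> iso_zero_C scB mu dB M"
proof -
  interpret comodule_alg mu u de eps Sa scB dB
    by (intro comodule_alg.intro hopf.intro k_alg.intro comodule_alg_axioms.intro) fact+
  \<comment> \<open>The embedding of \<open>'m\<close> into \<open>'u\<close> is obtained via constant functions from that of
    \<open>'i \<Rightarrow> 'm\<close>.\<close>
  obtain e :: "('i \<Rightarrow> 'm) \<Rightarrow> 'u" where e: "inj e"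
    using assms(5) by blast
  have "in_NH scB mu dB M"
    using assms(7) projective_in_NH[OF assms(4) e] injective_in_NH[OF assms(4) e] by blast
  then show ?thesis
    using in_NH_imp_iso_zero_C[OF assms(4)] by blast
qed

end
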